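(* For every $\lambda>0$ and every $h\ge 0$ such that $$h<\underline h(\lambda):=\frac{3}{4\lambda}\log \mathsf M\!\left(-\tfrac{4\lambda}{3}\right),$$ one has $\textsc{f}(\lambda,h)>0$, i.e. $(\lambda,h)$ is localized.
   Context: Let $S=(S_n)_{n\ge 0}$ be the simple symmetric random walk on $\mathbb Z$ with $S_0=0$ (law $\mathbf P$, expectation $\mathbf E$). Let $\omega=(\omega_n)_{n\ge1}$ be i.i.d. real random variables, independent of $S$, with law $\mathbb P$ (expectation $\mathbb E$), such that $\mathsf M(\alpha):=\mathbb E[e^{\alpha\omega_1}]<\infty$ for all $\alpha\in\mathbb R$, $\mathbb E[\omega_1]=0$ and $\mathbb E[\omega_1^2]=1$. Sign convention: $\mathrm{sign}(S_n)$ is the usual sign when $S_n\neq0$, and if $S_{2n}=0$ one sets $\mathrm{sign}(S_{2n}):=\mathrm{sign}(S_{2n-1})$. Put $\Delta_n:=(1-\mathrm{sign}(S_n))/2\in\{0,1\}$. For $\lambda\ge0$, $h\ge0$, $N\in2\mathbb N$, $x\in\mathbb Z$ define $Z^{\lambda,h}_{N,\omega}:=\mathbf E\big[\exp\big(-2\lambda\sum_{n=1}^N(\omega_n+h)\Delta_n\big)\big]$ and $Z^{\lambda,h}_{N,\omega}(x):=\mathbf E\big[\exp\big(-2\lambda\sum_{n=1}^N(\omega_n+h)\Delta_n\big);\,S_N=x\big]$. It is known that the limit $\textsc{f}(\lambda,h):=\lim_{N\to\infty}\frac1N\log Z^{\lambda,h}_{N,\omega}$ exists $\mathbb P$-a.s.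 and in $L^1(\mathbb P)$, is non-random, and equals $\lim_{N\to\infty,\,N\in2\mathbb N}\frac1N\log Z^{\lambda,h}_{N,\omega}(0)$ a.s. The point $(\lambda,h)$ is called localized if $\textsc{f}(\lambda,h)>0$. *)

theory Defs
  imports "HOL-Probability.Probability"
begin

text \<open>Walk paths of length N are encoded as boolean lists (True = step +1, False = step -1);
  the simple random walk expectation is the uniform average over the 2^N such lists.\<close>

definition walk_pos :: "bool list \<Rightarrow> nat \<Rightarrow> int" where
  "walk_pos xs n = (\<Sum>i<n. if xs ! i then 1 else -1)"

text \<open>Delta_n = (1 - sign S_n)/2, with sign S_n := sign S_(n-1) when S_n = 0 (n >= 1).\<close>
definition walk_Delta :: "bool list \<Rightarrow> nat \<Rightarrow> real" where
  "walk_Delta xs n =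
     (if walk_pos xs n < 0 \<or> (walk_pos xs n = 0 \<and> walk_pos xs (n - 1) < 0) then 1 else 0)"

definition paths :: "nat \<Rightarrow> bool list set" where
  "paths N = {xs. length xs = N}"

definition copolymer_Z :: "real \<Rightarrow> real \<Rightarrow> nat \<Rightarrow> (nat \<Rightarrow> real) \<Rightarrow> real" where
  "copolymer_Z lam h N \<omega> =
     (\<Sum>xs\<in>paths N. exp (- 2 * lam * (\<Sum>n=1..N. (\<omega> n + h) * walk_Delta xs n))) / 2 ^ N"

definition disorder :: "real measure \<Rightarrow> (nat \<Rightarrow> real) measure" where
  "disorder \<mu> = PiM UNIV (\<lambda>_. \<mu>)"

text \<open>Free energy: limit over N in 2N of (1/N) log Z_N; as the a.s. limit is non-random and
  the convergence holds in L^1, it equals the limit of (1/N) E[log Z_N].\<close>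
definition free_energy :: "real measure \<Rightarrow> real \<Rightarrow> real \<Rightarrow> real" where
  "free_energy \<mu> lam h =
     lim (\<lambda>k. (\<integral>\<omega>. ln (copolymer_Z lam h (2 * k) \<omega>) \<partial>disorder \<mu>) / real (2 * k))"

definition mgf :: "real measure \<Rightarrow> real \<Rightarrow> real" where
  "mgf \<mu> \<alpha> = (\<integral>x. exp (\<alpha> * x) \<partial>\<mu>)"

end

theory Submission
  imports Defs "HOL-Real_Asymp.Real_Asymp"
begin

text \<open>
  Restricted to bridges, i.e. to paths back at the origin at time \<open>2 * k\<close>, the partition function
  is supermultiplicative. By the shift invariance of the disorder and Fekete's lemma the free energy
  is therefore the supremum of \<open>E ln (bridge_Z (2 * k)) / (2 * k)\<close>; the unrestricted partition
  function is larger by at most a polynomial factor, because the part of a path after its last zero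
  can be traded for any excursion of the same sign and length. So it suffices to find one \<open>k\<close> with
  \<open>E ln (bridge_Z (2 * k)) > 0\<close>.

  Cut time into blocks of length \<open>2 * L\<close> and let the path make a negative excursion exactly on the
  blocks whose gain \<open>-2 * \<lambda> * \<Sum>(\<omega>\<^sub>n + h)\<close> is at least \<open>\<theta>\<close>, staying positive elsewhere.
  A positive excursion of length \<open>2 * m\<close> has probability of order \<open>m powr (-3/2)\<close>, so if a block
  is selected with probability \<open>p\<close>, the entropic cost is about \<open>3/2 * ln (1 / p)\<close> per selected
  block. For \<open>h\<close> below the threshold the moment
  \<open>E exp (2/3 * gain) = (exp (-4 * \<lambda> * h / 3) * M (-4 * \<lambda> / 3)) ^ (2 * L)\<close> grows exponentially
  in \<open>L\<close>, and a Chebyshev bound on all levels at once yields a level \<open>\<theta>\<close> with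
  \<open>p \<ge> exp (level_offset L - 2/3 * \<theta>)\<close>. For this level the expected gain of a selected block
  exceeds its cost.
\<close>

section \<open>Walk paths\<close>

lemma walk_pos_0 [simp]: "walk_pos xs 0 = 0"
  by (simp add: walk_pos_def)

lemma walk_pos_Suc: "walk_pos xs (Suc n) = walk_pos xs n + (if xs ! n then 1 else -1)"
  by (simp add: walk_pos_def)

lemma walk_pos_Cons: "walk_pos (x # xs) (Suc n) = (if x then 1 else -1) + walk_pos xs n"
  unfolding walk_pos_def sum.lessThan_Suc_shift by simp

lemma walk_pos_append_le: "n \<le> length xs \<Longrightarrow> walk_pos (xs @ ys) n = walk_pos xs n"
  unfolding walk_pos_def by (intro sum.cong) (auto simp: nth_append)

lemma walk_pos_append:
  "walk_pos (xs @ ys) (length xs + j) = walk_pos xs (length xs) + walk_pos ys j"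
  by (induction j) (simp_all add: walk_pos_Suc nth_append walk_pos_append_le)

lemma walk_pos_take: "n \<le> m \<Longrightarrow> walk_pos (take m xs) n = walk_pos xs n"
  unfolding walk_pos_def by (intro sum.cong) auto

lemma walk_pos_drop:
  assumes "t \<le> length xs"
  shows "walk_pos (drop t xs) j = walk_pos xs (t + j) - walk_pos xs t"
  using walk_pos_append[of "take t xs" "drop t xs" j] assms by (simp add: walk_pos_take)

lemma walk_pos_map_Not: "j \<le> length xs \<Longrightarrow> walk_pos (map Not xs) j = - walk_pos xs j"
  by (induction j) (simp_all add: walk_pos_Suc)

lemma even_walk_pos_plus: "even (walk_pos xs n + int n)"
proof (induction n)
  case (Suc n)
  have "walk_pos xs (Suc n) + int (Suc n) = (walk_pos xs n + int n) + (if xs ! n then 2 else 0)"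
    by (simp add: walk_pos_Suc)
  moreover have "even (if xs ! n then 2 else (0::int))" by simp
  ultimately show ?case using Suc by (metis even_add)
qed simp

lemma walk_pos_length: "walk_pos xs (length xs) = 2 * int (length (filter id xs)) - int (length xs)"
  by (induction xs) (simp_all add: walk_pos_Cons)

lemma walk_pos_crosses:
  assumes "a \<le> b" and "(walk_pos xs a - z) * (walk_pos xs b - z) \<le> 0"
  shows "\<exists>k. a \<le> k \<and> k \<le> b \<and> walk_pos xs k = z"
  using assms
proof (induction b rule: dec_induct)
  case (step b)
  show ?case
  proof (cases "(walk_pos xs a - z) * (walk_pos xs b - z) \<le> 0")
    case True
    with step.IH show ?thesis by (meson le_SucI)
  next
    case False
    with step.prems have "walk_pos xs (Suc b) = z"
      by (auto simp: walk_pos_Suc mult_le_0_iff zero_less_mult_iff split: if_splits)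
    then show ?thesis using step.hyps by (intro exI[of _ "Suc b"]) auto
  qed
qed (auto simp: mult_le_0_iff)

lemma walk_Delta_cases: "walk_Delta xs n = 0 \<or> walk_Delta xs n = 1"
  by (simp add: walk_Delta_def)

lemma walk_Delta_append_le: "n \<le> length xs \<Longrightarrow> walk_Delta (xs @ ys) n = walk_Delta xs n"
  unfolding walk_Delta_def by (simp add: walk_pos_append_le)

lemma walk_Delta_append:
  assumes "walk_pos xs (length xs) = 0" and "1 \<le> j"
  shows "walk_Delta (xs @ ys) (length xs + j) = walk_Delta ys j"
proof -
  have shift: "length xs + j - 1 = length xs + (j - 1)" using assms by simp
  show ?thesis unfolding walk_Delta_def shift walk_pos_append using assms by simp
qed

definition walk_nonneg :: "bool list \<Rightarrow> bool" where
  "walk_nonneg xs \<longleftrightarrow> (\<forall>j \<le> length xs. walk_pos xs j \<ge> 0)"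

definition walk_nonpos :: "bool list \<Rightarrow> bool" where
  "walk_nonpos xs \<longleftrightarrow> (\<forall>j \<le> length xs. walk_pos xs j \<le> 0)"

lemma walk_nonpos_map_Not: "walk_nonneg xs \<Longrightarrow> walk_nonpos (map Not xs)"
  by (simp add: walk_nonneg_def walk_nonpos_def walk_pos_map_Not)

definition path_energy :: "real \<Rightarrow> (nat \<Rightarrow> real) \<Rightarrow> bool list \<Rightarrow> real" where
  "path_energy h \<omega> xs = (\<Sum>n=1..length xs. (\<omega> n + h) * walk_Delta xs n)"

definition shift_seq :: "nat \<Rightarrow> (nat \<Rightarrow> 'a) \<Rightarrow> nat \<Rightarrow> 'a" where
  "shift_seq k = (\<lambda>\<omega> n. \<omega> (n + k))"

lemma shift_seq_shift_seq [simp]: "shift_seq a (shift_seq b \<omega>) = shift_seq (a + b) \<omega>"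
  by (simp add: shift_seq_def ac_simps)

lemma path_energy_append:
  assumes "walk_pos xs (length xs) = 0"
  shows "path_energy h \<omega> (xs @ ys) = path_energy h \<omega> xs + path_energy h (shift_seq (length xs) \<omega>) ys"
proof -
  let ?a = "length xs" and ?b = "length ys"
  let ?f = "\<lambda>n. (\<omega> n + h) * walk_Delta (xs @ ys) n"
  have "path_energy h \<omega> (xs @ ys) = sum ?f {1..?a} + sum ?f {1 + ?a..?b + ?a}"
    unfolding path_energy_def using sum.ub_add_nat[of 1 ?a ?f ?b] by (simp add: add.commute)
  also have "sum ?f {1..?a} = path_energy h \<omega> xs"
    unfolding path_energy_def by (intro sum.cong) (auto simp: walk_Delta_append_le)
  also have "sum ?f {1 + ?a..?b + ?a} = (\<Sum>j=1..?b. ?f (j + ?a))"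
    by (rule sum.shift_bounds_cl_nat_ivl)
  also have "\<dots> = path_energy h (shift_seq ?a \<omega>) ys"
    unfolding path_energy_def shift_seq_def
    by (intro sum.cong refl) (metis walk_Delta_append[OF assms] add.commute atLeastAtMost_iff)
  finally show ?thesis .
qed

lemma path_energy_nonneg_walk:
  assumes "walk_nonneg xs"
  shows "path_energy h \<omega> xs = 0"
  unfolding path_energy_def
proof (intro sum.neutral ballI)
  fix n assume "n \<in> {1..length xs}"
  then have "walk_pos xs n \<ge> 0" "walk_pos xs (n - 1) \<ge> 0"
    using assms by (auto simp: walk_nonneg_def)
  then show "(\<omega> n + h) * walk_Delta xs n = 0" by (simp add: walk_Delta_def)
qed

lemma path_energy_nonpos_walk:
  assumes "walk_nonpos xs"
  shows "path_energy h \<omega> xs = (\<Sum>n=1..length xs. \<omega> n + h)"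
  unfolding path_energy_def
proof (intro sum.cong refl)
  fix n assume n: "n \<in> {1..length xs}"
  then have "walk_pos xs n \<le> 0" "walk_pos xs (n - 1) \<le> 0"
    using assms by (auto simp: walk_nonpos_def)
  moreover have "walk_pos xs n = walk_pos xs (n - 1) + (if xs ! (n - 1) then 1 else -1)"
    using n walk_pos_Suc[of xs "n - 1"] by simp
  ultimately have "walk_Delta xs n = 1" by (auto simp: walk_Delta_def split: if_splits)
  then show "(\<omega> n + h) * walk_Delta xs n = \<omega> n + h" by simp
qed

lemma abs_path_energy_le: "\<bar>path_energy h \<omega> xs\<bar> \<le> (\<Sum>n=1..length xs. \<bar>\<omega> n + h\<bar>)"
  unfolding path_energy_def
proof (rule order.trans[OF sum_abs], intro sum_mono)
  fix n
  show "\<bar>(\<omega> n + h) * walk_Delta xs n\<bar> \<le> \<bar>\<omega> n + h\<bar>"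
    using walk_Delta_cases[of xs n] by auto
qed

lemma finite_paths [simp]: "finite (paths N)"
  using finite_lists_length_eq[of "UNIV :: bool set" N] by (simp add: paths_def)

lemma card_paths: "card (paths N) = 2 ^ N"
  using card_lists_length_eq[of "UNIV :: bool set" N] by (simp add: paths_def)

lemma card_lists_count_True:
  "card {xs :: bool list. length xs = n \<and> length (filter id xs) = k} = n choose k"
proof -
  let ?T = "\<lambda>xs :: bool list. {i. i < length xs \<and> xs ! i}"
  let ?L = "\<lambda>B. map (\<lambda>i. i \<in> B) [0..<n]"
  have T_L: "?T (?L B) = B" if "B \<subseteq> {..<n}" for B
    using that by auto
  have "bij_betw ?T {xs. length xs = n \<and> length (filter id xs) = k} {B. B \<subseteq> {..<n} \<and> card B = k}"
  proof (rule bij_betw_byWitness[where f' = ?L])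
    show "?L ` {B. B \<subseteq> {..<n} \<and> card B = k} \<subseteq> {xs. length xs = n \<and> length (filter id xs) = k}"
      using T_L by (auto simp: length_filter_conv_card)
  qed (auto simp: T_L length_filter_conv_card intro: nth_equalityI)
  then show ?thesis using n_subsets[of "{..<n}" k] by (simp add: bij_betw_same_card)
qed

definition paths_to :: "nat \<Rightarrow> int \<Rightarrow> bool list set" where
  "paths_to n z = {xs \<in> paths n. walk_pos xs n = z}"

abbreviation bridges :: "nat \<Rightarrow> bool list set" where
  "bridges n \<equiv> paths_to n 0"

lemma finite_paths_to [simp]: "finite (paths_to n z)"
  by (simp add: paths_to_def)

lemma card_paths_to:
  assumes "2 * int k - int n = z"
  shows "card (paths_to n z) = n choose k"
proof -
  have "paths_to n z = {xs. length xs = n \<and> length (filter id xs) = k}"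
    using assms by (auto simp: paths_to_def paths_def walk_pos_length)
  then show ?thesis by (simp add: card_lists_count_True)
qed

section \<open>The reflection principle and positive excursions\<close>

definition hit_time :: "int \<Rightarrow> bool list \<Rightarrow> nat" where
  "hit_time z xs = (LEAST i. walk_pos xs i = z)"

definition reflect_after_hit :: "int \<Rightarrow> bool list \<Rightarrow> bool list" where
  "reflect_after_hit z xs = take (hit_time z xs) xs @ map Not (drop (hit_time z xs) xs)"

lemma hit_time:
  assumes "walk_pos xs j = z"
  shows "hit_time z xs \<le> j" "walk_pos xs (hit_time z xs) = z"
    and "\<And>i. i < hit_time z xs \<Longrightarrow> walk_pos xs i \<noteq> z"
  using assms unfolding hit_time_def by (auto intro: Least_le LeastI dest: not_less_Least)

lemma length_reflect_after_hit [simp]: "length (reflect_after_hit z xs) = length xs"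
  by (simp add: reflect_after_hit_def)

lemma walk_pos_reflect_before_hit:
  assumes "hit_time z xs \<le> length xs" and "i \<le> hit_time z xs"
  shows "walk_pos (reflect_after_hit z xs) i = walk_pos xs i"
  using assms unfolding reflect_after_hit_def by (simp add: walk_pos_append_le walk_pos_take)

lemma walk_pos_reflect_after_hit:
  assumes "hit_time z xs + j \<le> length xs"
  shows "walk_pos (reflect_after_hit z xs) (hit_time z xs + j)
    = 2 * walk_pos xs (hit_time z xs) - walk_pos xs (hit_time z xs + j)"
proof -
  let ?t = "hit_time z xs"
  have "walk_pos (reflect_after_hit z xs) (?t + j)
      = walk_pos (take ?t xs) ?t + walk_pos (map Not (drop ?t xs)) j"
    using walk_pos_append[of "take ?t xs" "map Not (drop ?t xs)" j] assms
    by (simp add: reflect_after_hit_def min_absorb2)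
  also have "\<dots> = walk_pos xs ?t - walk_pos (drop ?t xs) j"
    using assms by (simp add: walk_pos_take walk_pos_map_Not)
  finally show ?thesis using assms by (simp add: walk_pos_drop)
qed

lemma reflect_after_hit_involution:
  assumes "walk_pos xs j = z" "j \<le> length xs"
  shows "reflect_after_hit z (reflect_after_hit z xs) = xs"
proof -
  note hit = hit_time[OF assms(1)]
  have t: "hit_time z xs \<le> length xs" using hit(1) assms(2) by simp
  have "hit_time z (reflect_after_hit z xs) = hit_time z xs"
    unfolding hit_time_def[of z "reflect_after_hit z xs"]
  proof (rule Least_equality)
    show "walk_pos (reflect_after_hit z xs) (hit_time z xs) = z"
      using walk_pos_reflect_before_hit[OF t order.refl] hit(2) by simp
    show "hit_time z xs \<le> i" if "walk_pos (reflect_after_hit z xs) i = z" for i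
      using that hit(3)[of i] walk_pos_reflect_before_hit[OF t, of i]
      by (cases "i < hit_time z xs") auto
  qed
  then show ?thesis using t by (simp add: reflect_after_hit_def comp_def)
qed

definition paths_hitting :: "nat \<Rightarrow> int \<Rightarrow> int \<Rightarrow> bool list set" where
  "paths_hitting n y z = {xs \<in> paths_to n y. \<exists>j\<le>n. walk_pos xs j = z}"

lemma reflect_after_hit_paths_hitting:
  assumes "xs \<in> paths_hitting n y z"
  shows "reflect_after_hit z xs \<in> paths_hitting n (2 * z - y) z"
proof -
  obtain j where j: "j \<le> n" "walk_pos xs j = z" and xs: "length xs = n" "walk_pos xs n = y"
    using assms by (auto simp: paths_hitting_def paths_to_def paths_def)
  note hit = hit_time[OF j(2)]
  have t: "hit_time z xs \<le> n" using hit(1) j(1) by simp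
  have "walk_pos (reflect_after_hit z xs) (hit_time z xs + (n - hit_time z xs)) = 2 * z - y"
    using walk_pos_reflect_after_hit[of z xs "n - hit_time z xs"] t xs hit(2) by simp
  moreover have "walk_pos (reflect_after_hit z xs) (hit_time z xs) = z"
    using walk_pos_reflect_before_hit[of z xs] t xs hit(2) by simp
  ultimately show ?thesis
    using t xs by (auto simp: paths_hitting_def paths_to_def paths_def)
qed

theorem card_paths_hitting_reflect:
  "card (paths_hitting n y z) = card (paths_hitting n (2 * z - y) z)"
proof (rule bij_betw_same_card, rule bij_betw_byWitness[where f' = "reflect_after_hit z"])
  have inv: "reflect_after_hit z (reflect_after_hit z xs) = xs" if "xs \<in> paths_hitting n y' z" for xs y'
    using that reflect_after_hit_involution
    by (fastforce simp: paths_hitting_def paths_to_def paths_def)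
  show "\<forall>xs\<in>paths_hitting n y z. reflect_after_hit z (reflect_after_hit z xs) = xs"
    "\<forall>xs\<in>paths_hitting n (2 * z - y) z. reflect_after_hit z (reflect_after_hit z xs) = xs"
    using inv by blast+
  show "reflect_after_hit z ` paths_hitting n y z \<subseteq> paths_hitting n (2 * z - y) z"
    using reflect_after_hit_paths_hitting by blast
  show "reflect_after_hit z ` paths_hitting n (2 * z - y) z \<subseteq> paths_hitting n y z"
    using reflect_after_hit_paths_hitting[of _ n "2 * z - y" z] by auto
qed

definition pos_excursions :: "nat \<Rightarrow> bool list set" where
  "pos_excursions m = {xs \<in> bridges (2 * m). walk_nonneg xs}"

lemma card_pos_excursions_plus:
  "card (pos_excursions m) + card (paths_to (2 * m) (-2)) = (2 * m) choose m"
proof -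
  have dips: "\<not> walk_nonneg xs \<longleftrightarrow> (\<exists>j\<le>length xs. walk_pos xs j = -1)" for xs
  proof
    assume "\<not> walk_nonneg xs"
    then obtain j where "j \<le> length xs" "walk_pos xs j < 0" by (auto simp: walk_nonneg_def)
    moreover obtain k where "k \<le> j" "walk_pos xs k = -1"
      using walk_pos_crosses[of 0 j xs "-1"] \<open>walk_pos xs j < 0\<close> by auto
    ultimately show "\<exists>j\<le>length xs. walk_pos xs j = -1" by (meson order.trans)
  qed (auto simp: walk_nonneg_def)
  have "paths_hitting (2 * m) (-2) (-1) = paths_to (2 * m) (-2)"
    using walk_pos_crosses[of 0 "2 * m" _ "-1"] by (fastforce simp: paths_hitting_def paths_to_def)
  then have "card (paths_to (2 * m) (-2)) = card (paths_hitting (2 * m) 0 (-1))"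
    using card_paths_hitting_reflect[of "2 * m" 0 "-1"] by simp
  moreover have "bridges (2 * m) = pos_excursions m \<union> paths_hitting (2 * m) 0 (-1)"
    by (auto simp: pos_excursions_def paths_hitting_def paths_to_def paths_def; metis dips)
  moreover have "pos_excursions m \<inter> paths_hitting (2 * m) 0 (-1) = {}"
    by (auto simp: pos_excursions_def paths_hitting_def walk_nonneg_def paths_to_def paths_def)
  moreover have "card (bridges (2 * m)) = (2 * m) choose m"
    by (rule card_paths_to) simp
  ultimately show ?thesis
    by (metis card_Un_disjoint finite_paths_to finite_Un)
qed

lemma card_pos_excursions: "real (card (pos_excursions m)) * (real m + 1) = real ((2 * m) choose m)"
proof (cases m)
  case 0
  then have "pos_excursions m = {[]}"
    by (auto simp: pos_excursions_def paths_to_def paths_def walk_nonneg_def)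
  then show ?thesis using 0 by simp
next
  case (Suc m')
  have "card (paths_to (2 * m) (-2)) = (2 * m) choose m'"
    using Suc by (intro card_paths_to) simp
  then have c: "card (pos_excursions m) + ((2 * m) choose m') = (2 * m) choose m"
    using card_pos_excursions_plus[of m] by simp
  have "m * ((2 * m) choose m) = (m + 1) * ((2 * m) choose m')"
    using Suc_times_binomial_add[of m' m] Suc by (simp add: mult_2)
  then have "real m * real ((2 * m) choose m) = (real m + 1) * real ((2 * m) choose m')"
    by (metis of_nat_Suc of_nat_mult Suc_eq_plus1 add.commute)
  moreover have "real (card (pos_excursions m)) + real ((2 * m) choose m') = real ((2 * m) choose m)"
    using c by (metis of_nat_add)
  ultimately show ?thesis by algebra
qed

lemma central_binomial_Suc:
  "real ((2 * Suc m) choose Suc m) * (real m + 1) = real ((2 * m) choose m) * 2 * (2 * real m + 1)"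
proof -
  have a: "Suc (Suc (2*m)) * (Suc (2*m) choose m) = (Suc (Suc (2*m)) choose Suc m) * Suc m"
    by (rule Suc_times_binomial_eq)
  have b: "Suc (2*m) * (2*m choose m) = (Suc (2*m) choose Suc m) * Suc m"
    by (rule Suc_times_binomial_eq)
  have c: "(Suc (2*m) choose Suc m) = (Suc (2*m) choose m)"
    by (subst binomial_symmetric) auto
  have "real ((2 * Suc m) choose Suc m) * (real m + 1) * (real m + 1)
      = real (Suc (Suc (2*m)) choose Suc m) * Suc m * Suc m" by (simp add: algebra_simps)
  also have "\<dots> = real (Suc (Suc (2*m))) * (Suc (2*m) choose m) * Suc m"
    using arg_cong[OF a, of real] by (simp only: of_nat_mult)
  also have "\<dots> = real (Suc (Suc (2*m))) * (Suc (2*m) * (2*m choose m))"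
    using arg_cong[OF b, of real] c by (simp only: of_nat_mult mult.assoc)
  also have "\<dots> = (real ((2*m) choose m) * 2 * (2 * real m + 1)) * (real m + 1)"
    by (simp add: algebra_simps)
  finally show ?thesis by simp
qed

lemma central_binomial_sq_lower_bound:
  "m \<ge> 1 \<Longrightarrow> 16 ^ m \<le> (real ((2 * m) choose m))\<^sup>2 * (4 * real m)"
proof (induction m rule: dec_induct)
  case (step m)
  let ?c = "real ((2 * m) choose m)" and ?d = "real ((2 * Suc m) choose Suc m)"
  have m: "real m \<ge> 1" using step by simp
  have "(4 * real m) * (real m + 1) \<le> (2 * real m + 1)\<^sup>2"
    by (simp add: power2_eq_square algebra_simps)
  then have "16 ^ m * ((4 * real m) * (real m + 1)) \<le> (?c\<^sup>2 * (4 * real m)) * (2 * real m + 1)\<^sup>2"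
    by (intro mult_mono step.IH) auto
  then have "(4 * real m) * (16 ^ m * (real m + 1)) \<le> (4 * real m) * (?c\<^sup>2 * (2 * real m + 1)\<^sup>2)"
    by (simp only: mult_ac)
  then have "16 ^ m * (real m + 1) \<le> ?c\<^sup>2 * (2 * real m + 1)\<^sup>2"
    using m by (simp add: mult_le_cancel_left_pos)
  also have "\<dots> = (?d * (real m + 1))\<^sup>2 / 4"
    using central_binomial_Suc[of m] by (simp add: power_mult_distrib)
  finally have "16 ^ Suc m * (real m + 1) \<le> (4 * ?d\<^sup>2 * (real m + 1)) * (real m + 1)"
    by (simp add: power2_eq_square algebra_simps del: binomial_Suc_Suc)
  then have "16 ^ Suc m \<le> 4 * ?d\<^sup>2 * (real m + 1)"
    by (rule mult_right_le_imp_le) (simp add: add_pos_nonneg)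
  then show ?case by (simp add: algebra_simps del: binomial_Suc_Suc)
qed simp

definition excursion_prob :: "nat \<Rightarrow> real" where
  "excursion_prob m = real (card (pos_excursions m)) / 4 ^ m"

lemma excursion_prob_lower_bound: "1 / (2 * (real m + 1) powr (3/2)) \<le> excursion_prob m"
proof (cases "m = 0")
  case True
  have "pos_excursions 0 = {[]}"
    by (auto simp: pos_excursions_def paths_to_def paths_def walk_nonneg_def)
  then show ?thesis using True by (simp add: excursion_prob_def)
next
  case False
  let ?c = "real ((2 * m) choose m)"
  have c: "?c > 0" by simp
  have "((4::real) ^ m)\<^sup>2 = 16 ^ m"
    by (simp add: power2_eq_square power_mult_distrib[symmetric])
  also have "\<dots> \<le> (?c * (2 * sqrt (real m)))\<^sup>2"
    using central_binomial_sq_lower_bound[of m] False by (simp add: power_mult_distrib)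
  finally have "4 ^ m \<le> ?c * (2 * sqrt (real m))"
    by (rule power2_le_imp_le) simp
  also have "\<dots> \<le> ?c * (2 * sqrt (real m + 1))" by (intro mult_left_mono) auto
  finally have A: "4 ^ m \<le> ?c * (2 * sqrt (real m + 1))" .
  have "(real m + 1) powr (3/2) = (real m + 1) powr 1 * (real m + 1) powr (1/2)"
    by (subst powr_add[symmetric]) simp
  then have "2 * (real m + 1) powr (3/2) = 2 * (real m + 1) * sqrt (real m + 1)"
    by (simp add: powr_half_sqrt)
  moreover have "(real m + 1) * (?c * (2 * sqrt (real m + 1))) = ?c * (2 * (real m + 1) * sqrt (real m + 1))"
    by (simp add: ac_simps)
  ultimately have "1 / (2 * (real m + 1) powr (3/2)) = ?c / ((real m + 1) * (?c * (2 * sqrt (real m + 1))))"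
    using c by simp
  also have "\<dots> \<le> ?c / ((real m + 1) * 4 ^ m)"
    using A c by (intro divide_left_mono mult_left_mono mult_pos_pos) auto
  also have "\<dots> = excursion_prob m"
  proof -
    have "real (card (pos_excursions m)) = ?c / (real m + 1)"
      using card_pos_excursions[of m] by (simp add: eq_divide_eq)
    then show ?thesis by (simp add: excursion_prob_def)
  qed
  finally show ?thesis .
qed

lemma excursion_prob_pos: "excursion_prob m > 0"
proof -
  have "0 < 1 / (2 * (real m + 1) powr (3/2))" by simp
  then show ?thesis using excursion_prob_lower_bound[of m] by linarith
qed

lemma ln_excursion_prob_lower_bound: "- ln 2 - 3/2 * ln (real m + 1) \<le> ln (excursion_prob m)"
proof -
  have "ln (1 / (2 * (real m + 1) powr (3/2))) = - ln 2 - 3/2 * ln (real m + 1)"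
    by (simp add: ln_div ln_mult)
  moreover have "ln (1 / (2 * (real m + 1) powr (3/2))) \<le> ln (excursion_prob m)"
    using excursion_prob_lower_bound[of m] by (intro ln_mono) auto
  ultimately show ?thesis by simp
qed

definition neg_excursions :: "nat \<Rightarrow> bool list set" where
  "neg_excursions m = map Not ` pos_excursions m"

lemma card_neg_excursions: "card (neg_excursions m) = card (pos_excursions m)"
proof -
  have "inj (map Not)" by (intro inj_mapI) (simp add: inj_def)
  then show ?thesis unfolding neg_excursions_def by (rule card_image[OF inj_on_subset[OF _ subset_UNIV]])
qed
lemma neg_excursions_subset: "neg_excursions m \<subseteq> {xs \<in> bridges (2 * m). walk_nonpos xs}"
  by (auto simp: neg_excursions_def pos_excursions_def paths_to_def paths_def walk_pos_map_Not
      walk_nonpos_map_Not)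

section \<open>Partition functions\<close>

lemma copolymer_Z_eq:
  "copolymer_Z lam h N \<omega> = (\<Sum>xs\<in>paths N. exp (-2 * lam * path_energy h \<omega> xs)) / 2 ^ N"
  unfolding copolymer_Z_def path_energy_def
  by (intro arg_cong2[where f = "(/)"] sum.cong refl) (auto simp: paths_def)

definition bridge_Z :: "real \<Rightarrow> real \<Rightarrow> nat \<Rightarrow> (nat \<Rightarrow> real) \<Rightarrow> real" where
  "bridge_Z lam h N \<omega> = (\<Sum>xs\<in>bridges N. exp (-2 * lam * path_energy h \<omega> xs)) / 2 ^ N"

lemma bridge_Z_le_copolymer_Z: "bridge_Z lam h N \<omega> \<le> copolymer_Z lam h N \<omega>"
  unfolding bridge_Z_def copolymer_Z_eq
  by (intro divide_right_mono sum_mono2) (auto simp: paths_to_def)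

lemma copolymer_Z_le_exp:
  assumes "lam \<ge> 0"
  shows "copolymer_Z lam h N \<omega> \<le> exp (2 * lam * (\<Sum>n=1..N. \<bar>\<omega> n + h\<bar>))"
proof -
  let ?E = "exp (2 * lam * (\<Sum>n=1..N. \<bar>\<omega> n + h\<bar>))"
  have "(\<Sum>xs\<in>paths N. exp (-2 * lam * path_energy h \<omega> xs)) \<le> (\<Sum>xs\<in>paths N. ?E)"
  proof (rule sum_mono)
    fix xs assume "xs \<in> paths N"
    have "- path_energy h \<omega> xs \<le> (\<Sum>n=1..N. \<bar>\<omega> n + h\<bar>)"
      using abs_path_energy_le[of h \<omega> xs] \<open>xs \<in> paths N\<close> by (auto simp: paths_def)
    then have "lam * (- path_energy h \<omega> xs) \<le> lam * (\<Sum>n=1..N. \<bar>\<omega> n + h\<bar>)"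
      using assms by (rule mult_left_mono)
    then show "exp (-2 * lam * path_energy h \<omega> xs) \<le> ?E" by simp
  qed
  also have "\<dots> = 2 ^ N * ?E" by (simp add: card_paths)
  finally show ?thesis unfolding copolymer_Z_eq by (simp add: field_simps)
qed

lemma two_power_double: "(2::real) ^ (2 * m) = 4 ^ m"
  by (simp add: power_mult)

lemma excursion_prob_le_bridge_Z: "excursion_prob m \<le> bridge_Z lam h (2 * m) \<omega>"
proof -
  have "real (card (pos_excursions m)) = (\<Sum>xs\<in>pos_excursions m. exp (-2 * lam * path_energy h \<omega> xs))"
    by (simp add: path_energy_nonneg_walk pos_excursions_def)
  also have "\<dots> \<le> (\<Sum>xs\<in>bridges (2 * m). exp (-2 * lam * path_energy h \<omega> xs))"
    by (intro sum_mono2) (auto simp: pos_excursions_def)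
  finally show ?thesis
    unfolding bridge_Z_def excursion_prob_def two_power_double by (intro divide_right_mono) auto
qed

lemma bridge_Z_pos: "bridge_Z lam h (2 * m) \<omega> > 0"
  using excursion_prob_le_bridge_Z[of m lam h \<omega>] excursion_prob_pos[of m] by linarith

lemma neg_excursion_le_bridge_Z:
  "excursion_prob m * exp (-2 * lam * (\<Sum>n=1..2 * m. \<omega> n + h)) \<le> bridge_Z lam h (2 * m) \<omega>"
proof -
  have "path_energy h \<omega> xs = (\<Sum>n=1..2 * m. \<omega> n + h)" if "xs \<in> neg_excursions m" for xs
    using subsetD[OF neg_excursions_subset that]
    by (simp add: path_energy_nonpos_walk paths_to_def paths_def)
  then have "real (card (pos_excursions m)) * exp (-2 * lam * (\<Sum>n=1..2 * m. \<omega> n + h))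
      = (\<Sum>xs\<in>neg_excursions m. exp (-2 * lam * path_energy h \<omega> xs))"
    by (simp add: card_neg_excursions)
  also have "\<dots> \<le> (\<Sum>xs\<in>bridges (2 * m). exp (-2 * lam * path_energy h \<omega> xs))"
    using neg_excursions_subset[of m] by (intro sum_mono2) auto
  finally have "real (card (pos_excursions m)) * exp (-2 * lam * (\<Sum>n=1..2 * m. \<omega> n + h)) / 4 ^ m
      \<le> (\<Sum>xs\<in>bridges (2 * m). exp (-2 * lam * path_energy h \<omega> xs)) / 4 ^ m"
    by (rule divide_right_mono) simp
  then show ?thesis unfolding bridge_Z_def excursion_prob_def two_power_double by simp
qed

lemma bridge_Z_supermult:
  "bridge_Z lam h N \<omega> * bridge_Z lam h M (shift_seq N \<omega>) \<le> bridge_Z lam h (N + M) \<omega>"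
proof -
  let ?f = "\<lambda>\<omega> xs. exp (-2 * lam * path_energy h \<omega> xs)"
  let ?cat = "\<lambda>(xs, ys). xs @ ys :: bool list"
  have inj: "inj_on ?cat (bridges N \<times> bridges M)"
  proof (rule inj_onI, clarify)
    fix xs ys xs' ys' assume "xs \<in> bridges N" "xs' \<in> bridges N" "xs @ ys = xs' @ ys'"
    then show "xs = xs' \<and> ys = ys'" by (simp add: paths_to_def paths_def)
  qed
  have cat: "?cat ` (bridges N \<times> bridges M) \<subseteq> bridges (N + M)"
  proof clarify
    fix xs ys assume "xs \<in> bridges N" "ys \<in> bridges M"
    then show "xs @ ys \<in> bridges (N + M)"
      using walk_pos_append[of xs ys M] by (simp add: paths_to_def paths_def)
  qed
  have "(\<Sum>xs\<in>bridges N. ?f \<omega> xs) * (\<Sum>ys\<in>bridges M. ?f (shift_seq N \<omega>) ys)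
      = (\<Sum>(xs, ys)\<in>bridges N \<times> bridges M. ?f \<omega> (xs @ ys))"
    unfolding sum_product sum.cartesian_product
  proof (intro sum.cong refl, clarify)
    fix xs ys assume "xs \<in> bridges N" "ys \<in> bridges M"
    then have "length xs = N" "walk_pos xs (length xs) = 0" by (auto simp: paths_to_def paths_def)
    then show "?f \<omega> xs * ?f (shift_seq N \<omega>) ys = ?f \<omega> (xs @ ys)"
      by (simp add: path_energy_append distrib_left flip: exp_add)
  qed
  also have "\<dots> = (\<Sum>zs\<in>?cat ` (bridges N \<times> bridges M). ?f \<omega> zs)"
    using sum.reindex[OF inj, of "?f \<omega>"] by (simp add: comp_def case_prod_unfold)
  also have "\<dots> \<le> (\<Sum>zs\<in>bridges (N + M). ?f \<omega> zs)"
    by (intro sum_mono2 cat) auto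
  finally show ?thesis unfolding bridge_Z_def by (simp add: power_add divide_right_mono)
qed

lemma ln_bridge_Z_supermult:
  "ln (bridge_Z lam h (2 * k) \<omega>) + ln (bridge_Z lam h (2 * j) (shift_seq (2 * k) \<omega>))
    \<le> ln (bridge_Z lam h (2 * (k + j)) \<omega>)"
proof -
  have pos: "0 < bridge_Z lam h (2 * k) \<omega>" "0 < bridge_Z lam h (2 * j) (shift_seq (2 * k) \<omega>)"
    by (rule bridge_Z_pos)+
  have "ln (bridge_Z lam h (2 * k) \<omega>) + ln (bridge_Z lam h (2 * j) (shift_seq (2 * k) \<omega>))
      = ln (bridge_Z lam h (2 * k) \<omega> * bridge_Z lam h (2 * j) (shift_seq (2 * k) \<omega>))"
    using pos by (simp add: ln_mult)
  also have "\<dots> \<le> ln (bridge_Z lam h (2 * k + 2 * j) \<omega>)"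
    using pos bridge_Z_supermult[of lam h "2 * k" \<omega> "2 * j"] by (intro ln_mono) auto
  finally show ?thesis by (simp add: distrib_left)
qed

definition last_zero :: "bool list \<Rightarrow> nat" where
  "last_zero p = (GREATEST t. t \<le> length p \<and> walk_pos p t = 0)"

lemma last_zero:
  shows "last_zero p \<le> length p" "walk_pos p (last_zero p) = 0"
    and "\<And>j. last_zero p < j \<Longrightarrow> j \<le> length p \<Longrightarrow> walk_pos p j \<noteq> 0"
proof -
  let ?P = "\<lambda>t. t \<le> length p \<and> walk_pos p t = 0"
  have "?P (last_zero p)"
    unfolding last_zero_def by (rule GreatestI_nat[of ?P 0 "length p"]) auto
  then show "last_zero p \<le> length p" "walk_pos p (last_zero p) = 0" by auto
  fix j assume "last_zero p < j" "j \<le> length p"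
  then show "walk_pos p j \<noteq> 0"
    unfolding last_zero_def using Greatest_le_nat[of ?P j "length p"] by fastforce
qed

lemma even_last_zero: "even (last_zero p)"
  using even_walk_pos_plus[of p "last_zero p"] last_zero(2)[of p] by simp

lemma walk_pos_drop_last_zero: "walk_pos (drop (last_zero p) p) j = walk_pos p (last_zero p + j)"
  using walk_pos_drop[OF last_zero(1), of p j] last_zero(2)[of p] by simp

lemma walk_pos_after_last_zero_sign:
  assumes "last_zero p + j \<le> length p"
  shows "0 \<le> walk_pos p (last_zero p + j) * walk_pos p (length p)"
proof (rule ccontr)
  let ?i = "last_zero p + j"
  assume "\<not> ?thesis"
  then have neg: "walk_pos p ?i * walk_pos p (length p) < 0" by simp
  then obtain k where k: "?i \<le> k" "k \<le> length p" "walk_pos p k = 0"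
    using walk_pos_crosses[of ?i "length p" p 0] assms by auto
  have "walk_pos p ?i \<noteq> 0" using neg by auto
  then have "last_zero p < k" using k(1,3) last_zero(2)[of p] by (cases "j = 0") auto
  then show False using last_zero(3) k(2,3) by blast
qed

lemma walk_nonneg_drop_last_zero:
  assumes "walk_pos p (length p) \<ge> 0"
  shows "walk_nonneg (drop (last_zero p) p)"
  unfolding walk_nonneg_def walk_pos_drop_last_zero
proof (intro allI impI)
  fix j assume j: "j \<le> length (drop (last_zero p) p)"
  show "walk_pos p (last_zero p + j) \<ge> 0"
  proof (cases "walk_pos p (length p) = 0")
    case True
    then have "last_zero p = length p"
      using last_zero(1,3)[of p] by (meson le_neq_implies_less order.refl)
    then show ?thesis using j last_zero(2)[of p] by simp
  next
    case False
    then show ?thesis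
      using walk_pos_after_last_zero_sign[of p j] last_zero(1)[of p] assms j
      by (simp add: zero_le_mult_iff)
  qed
qed

lemma walk_nonpos_drop_last_zero:
  assumes "walk_pos p (length p) < 0"
  shows "walk_nonpos (drop (last_zero p) p)"
  unfolding walk_nonpos_def walk_pos_drop_last_zero
  using walk_pos_after_last_zero_sign[of p] last_zero(1)[of p] assms
  by (auto simp: zero_le_mult_iff)

lemma path_energy_split_last_zero:
  "path_energy h \<omega> p
    = path_energy h \<omega> (take (last_zero p) p) + path_energy h (shift_seq (last_zero p) \<omega>) (drop (last_zero p) p)"
proof -
  let ?t = "last_zero p"
  have l: "length (take ?t p) = ?t" using last_zero(1)[of p] by simp
  have "walk_pos (take ?t p) (length (take ?t p)) = 0"
    unfolding l using last_zero(2)[of p] by (simp add: walk_pos_take)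
  then show ?thesis using path_energy_append[of "take ?t p" h \<omega> "drop ?t p"] l by simp
qed

text \<open>Replacing the part of a path after its last zero by any excursion of the same sign and
  length does not change the energy; the resulting bridges are the \<open>tail_swaps\<close> of the path.\<close>

definition tail_swaps :: "nat \<Rightarrow> bool list \<Rightarrow> bool list set" where
  "tail_swaps N p = (\<lambda>b. take (last_zero p) p @ b) `
     (if walk_pos p N \<ge> 0 then pos_excursions ((N - last_zero p) div 2)
      else neg_excursions ((N - last_zero p) div 2))"

lemma tail_length_even:
  assumes "p \<in> paths N" and "even N"
  shows "2 * ((N - last_zero p) div 2) = N - last_zero p"
  using assms last_zero(1)[of p] even_last_zero[of p] by (simp add: paths_def even_diff_nat)

lemma tail_swaps_subset_bridges:
  assumes p: "p \<in> paths N" and N: "even N"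
  shows "tail_swaps N p \<subseteq> bridges N"
proof
  let ?t = "last_zero p" and ?r = "(N - last_zero p) div 2"
  fix q assume "q \<in> tail_swaps N p"
  then obtain b where q: "q = take ?t p @ b" and b: "b \<in> pos_excursions ?r \<or> b \<in> neg_excursions ?r"
    unfolding tail_swaps_def by (auto split: if_splits)
  have t: "?t \<le> N" "length (take ?t p) = ?t" using last_zero(1)[of p] p by (auto simp: paths_def)
  have "b \<in> bridges (N - ?t)"
    using b tail_length_even[OF p N] neg_excursions_subset[of ?r] by (auto simp: pos_excursions_def)
  moreover have "walk_pos (take ?t p) ?t = 0" using last_zero(2)[of p] by (simp add: walk_pos_take)
  ultimately show "q \<in> bridges N"
    unfolding q using walk_pos_append[of "take ?t p" b "N - ?t"] t
    by (simp add: paths_to_def paths_def)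
qed

lemma take_tail_swaps: "q \<in> tail_swaps N p \<Longrightarrow> take (last_zero p) q = take (last_zero p) p"
  using last_zero(1)[of p] by (auto simp: tail_swaps_def split: if_splits)

lemma path_energy_tail_swaps:
  assumes p: "p \<in> paths N" and N: "even N" and q: "q \<in> tail_swaps N p"
  shows "path_energy h \<omega> q = path_energy h \<omega> p"
proof -
  let ?t = "last_zero p" and ?r = "(N - last_zero p) div 2"
  obtain b where qb: "q = take ?t p @ b"
      and b: "if walk_pos p N \<ge> 0 then b \<in> pos_excursions ?r else b \<in> neg_excursions ?r"
    using q unfolding tail_swaps_def by (auto split: if_splits)
  have lp: "length p = N" and lt: "length (take ?t p) = ?t"
    using p last_zero(1)[of p] by (auto simp: paths_def)
  have "walk_pos (take ?t p) (length (take ?t p)) = 0"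
    using last_zero(2)[of p] lt by (simp add: walk_pos_take)
  then have split_q: "path_energy h \<omega> q = path_energy h \<omega> (take ?t p) + path_energy h (shift_seq ?t \<omega>) b"
    unfolding qb using path_energy_append lt by simp
  show ?thesis
  proof (cases "walk_pos p N \<ge> 0")
    case True
    then have "walk_nonneg b" using b by (simp add: pos_excursions_def)
    moreover have "walk_nonneg (drop ?t p)" using walk_nonneg_drop_last_zero[of p] True lp by simp
    ultimately show ?thesis
      using split_q path_energy_split_last_zero[of h \<omega> p] by (simp add: path_energy_nonneg_walk)
  next
    case False
    then have "walk_nonpos b" "length b = N - ?t"
      using b neg_excursions_subset[of ?r] tail_length_even[OF p N] by (auto simp: paths_to_def paths_def)
    moreover have "walk_nonpos (drop ?t p)" using walk_nonpos_drop_last_zero[of p] False lp by simp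
    ultimately show ?thesis
      using split_q path_energy_split_last_zero[of h \<omega> p] lp by (simp add: path_energy_nonpos_walk)
  qed
qed

lemma card_tail_swaps: "card (tail_swaps N p) = card (pos_excursions ((N - last_zero p) div 2))"
proof -
  have "inj_on (\<lambda>b. take (last_zero p) p @ b) A" for A by (rule inj_onI) simp
  then show ?thesis unfolding tail_swaps_def by (simp add: card_image card_neg_excursions)
qed

lemma card_paths_with_prefix: "t \<le> N \<Longrightarrow> card {p \<in> paths N. take t p = u} \<le> 2 ^ (N - t)"
proof -
  assume t: "t \<le> N"
  have "inj_on (drop t) {p \<in> paths N. take t p = u}"
  proof (rule inj_onI)
    fix x y assume "x \<in> {p \<in> paths N. take t p = u}" "y \<in> {p \<in> paths N. take t p = u}"
      and "drop t x = drop t y"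
    then have "take t x @ drop t x = take t y @ drop t y" by simp
    then show "x = y" by simp
  qed
  moreover have "drop t ` {p \<in> paths N. take t p = u} \<subseteq> paths (N - t)" by (auto simp: paths_def)
  ultimately have "card {p \<in> paths N. take t p = u} \<le> card (paths (N - t))"
    by (intro card_inj_on_le) auto
  then show ?thesis by (simp add: card_paths)
qed

lemma sum_tail_swaps:
  assumes "p \<in> paths N" "even N"
  shows "(\<Sum>q\<in>tail_swaps N p. exp (-2 * lam * path_energy h \<omega> q))
    = excursion_prob ((N - last_zero p) div 2) * 2 ^ (N - last_zero p) * exp (-2 * lam * path_energy h \<omega> p)"
proof -
  let ?r = "(N - last_zero p) div 2"
  have "(4::real) ^ ?r = 2 ^ (N - last_zero p)"
    using two_power_double[of ?r] tail_length_even[OF assms] by simp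
  then have "real (card (tail_swaps N p)) = excursion_prob ?r * 2 ^ (N - last_zero p)"
    unfolding card_tail_swaps excursion_prob_def by simp
  then show ?thesis using path_energy_tail_swaps[OF assms] by simp
qed

lemma sum_tail_swap_preimages_le:
  "(\<Sum>p\<in>{p \<in> paths N. q \<in> tail_swaps N p}. 1 / 2 ^ (N - last_zero p)) \<le> real N + 1"
proof -
  let ?S = "{p \<in> paths N. q \<in> tail_swaps N p}"
  have "(\<Sum>p\<in>?S. 1 / 2 ^ (N - last_zero p) :: real)
      = (\<Sum>t\<in>{0..N}. \<Sum>p\<in>{p \<in> ?S. last_zero p = t}. 1 / 2 ^ (N - last_zero p))"
  proof (rule sum.group[symmetric])
    show "finite ?S" by (rule finite_subset[OF _ finite_paths[of N]]) auto
    show "last_zero ` ?S \<subseteq> {0..N}" using last_zero(1) by (auto simp: paths_def)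
  qed simp
  also have "\<dots> \<le> (\<Sum>t\<in>{0..N}. 1)"
  proof (intro sum_mono)
    fix t assume t: "t \<in> {0..N}"
    have "{p \<in> ?S. last_zero p = t} \<subseteq> {p \<in> paths N. take t p = take t q}"
      using take_tail_swaps by fastforce
    then have "card {p \<in> ?S. last_zero p = t} \<le> card {p \<in> paths N. take t p = take t q}"
      by (intro card_mono) auto
    also have "\<dots> \<le> 2 ^ (N - t)" using t by (intro card_paths_with_prefix) auto
    finally have "real (card {p \<in> ?S. last_zero p = t}) \<le> 2 ^ (N - t)"
      by (metis of_nat_le_iff of_nat_numeral of_nat_power)
    then show "(\<Sum>p\<in>{p \<in> ?S. last_zero p = t}. 1 / 2 ^ (N - last_zero p) :: real) \<le> 1"
      by (simp add: field_simps)
  qed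
  finally show ?thesis by simp
qed

lemma weight_le_tail_swaps:
  assumes p: "p \<in> paths (2 * n)"
  shows "exp (-2 * lam * path_energy h \<omega> p)
    \<le> (\<Sum>q\<in>tail_swaps (2 * n) p. exp (-2 * lam * path_energy h \<omega> q))
        * (2 * (real n + 1) powr (3/2) / 2 ^ (2 * n - last_zero p))"
proof -
  let ?r = "(2 * n - last_zero p) div 2" and ?K = "2 * (real n + 1) powr (3/2)"
  have N: "even (2 * n)" by simp
  have "1 / ?K \<le> 1 / (2 * (real ?r + 1) powr (3/2))"
    by (intro divide_left_mono mult_left_mono powr_mono2) auto
  then have "1 / ?K \<le> excursion_prob ?r"
    using excursion_prob_lower_bound[of ?r] by (rule order.trans)
  then have "1 \<le> excursion_prob ?r * ?K" by (simp add: field_simps)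
  then have "exp (-2 * lam * path_energy h \<omega> p) \<le> excursion_prob ?r * ?K * exp (-2 * lam * path_energy h \<omega> p)"
    by simp
  also have "\<dots> = (\<Sum>q\<in>tail_swaps (2 * n) p. exp (-2 * lam * path_energy h \<omega> q))
      * (?K / 2 ^ (2 * n - last_zero p))"
    using sum_tail_swaps[OF p N, of lam h \<omega>] by simp
  finally show ?thesis .
qed

text \<open>Every path is charged to its tail swaps, and every bridge is charged at most \<open>2 * n + 1\<close> times.\<close>

theorem copolymer_Z_le_bridge_Z:
  "copolymer_Z lam h (2 * n) \<omega>
    \<le> 2 * (real n + 1) powr (3/2) * (2 * real n + 1) * bridge_Z lam h (2 * n) \<omega>"
proof -
  define N where "N = 2 * n"
  define F where "F = (\<lambda>q. exp (-2 * lam * path_energy h \<omega> q))"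
  define K where "K = 2 * (real n + 1) powr (3/2)"
  have "(\<Sum>p\<in>paths N. F p)
      \<le> (\<Sum>p\<in>paths N. \<Sum>q\<in>{q \<in> bridges N. q \<in> tail_swaps N p}. F q * (K / 2 ^ (N - last_zero p)))"
  proof (intro sum_mono)
    fix p assume p: "p \<in> paths N"
    have "tail_swaps N p = {q \<in> bridges N. q \<in> tail_swaps N p}"
      using tail_swaps_subset_bridges[of p N] p by (auto simp: N_def)
    then show "F p \<le> (\<Sum>q\<in>{q \<in> bridges N. q \<in> tail_swaps N p}. F q * (K / 2 ^ (N - last_zero p)))"
      using weight_le_tail_swaps[of p n lam h \<omega>] p
      by (simp add: F_def K_def N_def sum_distrib_right sum_divide_distrib)
  qed
  also have "\<dots> = (\<Sum>q\<in>bridges N. F q * K * (\<Sum>p\<in>{p \<in> paths N. q \<in> tail_swaps N p}. 1 / 2 ^ (N - last_zero p)))"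
    by (subst sum.swap_restrict) (auto simp: sum_distrib_left)
  also have "\<dots> \<le> (\<Sum>q\<in>bridges N. F q * K * (real N + 1))"
    using sum_tail_swap_preimages_le by (intro sum_mono mult_left_mono) (auto simp: F_def K_def)
  also have "\<dots> = K * (real N + 1) * (\<Sum>q\<in>bridges N. F q)"
    by (simp add: sum_distrib_left mult_ac)
  finally have sums: "(\<Sum>p\<in>paths N. F p) \<le> K * (real N + 1) * (\<Sum>q\<in>bridges N. F q)" .
  have "copolymer_Z lam h N \<omega> = (\<Sum>p\<in>paths N. F p) / 2 ^ N"
    unfolding copolymer_Z_eq F_def ..
  also have "\<dots> \<le> K * (real N + 1) * (\<Sum>q\<in>bridges N. F q) / 2 ^ N"
    by (rule divide_right_mono[OF sums]) simp
  also have "\<dots> = K * (real N + 1) * bridge_Z lam h N \<omega>"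
    unfolding bridge_Z_def F_def by simp
  finally show ?thesis unfolding N_def K_def by simp
qed

section \<open>The disorder measure\<close>

context
  fixes \<mu> :: "real measure"
  assumes prob: "prob_space \<mu>" and borel: "sets \<mu> = sets borel"
begin

lemma prob_space_disorder: "prob_space (disorder \<mu>)"
  unfolding disorder_def by (intro prob_space_PiM prob)

lemma measurable_disorder_component [measurable]: "(\<lambda>\<omega>. \<omega> n) \<in> borel_measurable (disorder \<mu>)"
  using measurable_component_singleton[of n UNIV "\<lambda>_. \<mu>"] measurable_cong_sets[OF refl borel]
  unfolding disorder_def by blast

lemma measurable_shift_seq [measurable]: "shift_seq s \<in> measurable (disorder \<mu>) (disorder \<mu>)"
proof -
  have "(\<lambda>\<omega>. \<lambda>n\<in>UNIV. \<omega> (n + s)) \<in> measurable (disorder \<mu>) (disorder \<mu>)"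
    unfolding disorder_def by (intro measurable_restrict measurable_component_singleton) auto
  then show ?thesis unfolding shift_seq_def by (simp add: restrict_UNIV)
qed

lemma distr_shift_seq: "distr (disorder \<mu>) (disorder \<mu>) (shift_seq s) = disorder \<mu>"
proof -
  have "distr (PiM UNIV (\<lambda>_. \<mu>)) (PiM UNIV (\<lambda>_. \<mu>)) (\<lambda>\<omega>. \<lambda>n\<in>UNIV. \<omega> (n + s))
      = PiM UNIV (\<lambda>_. \<mu>)"
    using distr_PiM_reindex[of UNIV "\<lambda>_. \<mu>" "\<lambda>n. n + s" UNIV] prob by (auto simp: inj_on_def)
  then show ?thesis unfolding shift_seq_def by (simp add: disorder_def restrict_UNIV)
qed

lemma integral_shift_seq:
  fixes F :: "(nat \<Rightarrow> real) \<Rightarrow> real"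
  assumes [measurable]: "F \<in> borel_measurable (disorder \<mu>)"
  shows "(\<integral>\<omega>. F (shift_seq s \<omega>) \<partial>disorder \<mu>) = (\<integral>\<omega>. F \<omega> \<partial>disorder \<mu>)"
  using integral_distr[OF measurable_shift_seq[of s] assms] distr_shift_seq[of s] by simp

lemma integrable_shift_seq:
  fixes F :: "(nat \<Rightarrow> real) \<Rightarrow> real"
  assumes [measurable]: "F \<in> borel_measurable (disorder \<mu>)" and "integrable (disorder \<mu>) F"
  shows "integrable (disorder \<mu>) (\<lambda>\<omega>. F (shift_seq s \<omega>))"
  using integrable_distr_eq[OF measurable_shift_seq[of s] assms(1)] distr_shift_seq[of s] assms(2)
  by simp

lemma integral_prod_components:
  fixes g :: "real \<Rightarrow> real"
  assumes J: "finite J" and g: "integrable \<mu> g"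
  shows "integrable (disorder \<mu>) (\<lambda>\<omega>. \<Prod>i\<in>J. g (\<omega> i))"
    and "(\<integral>\<omega>. (\<Prod>i\<in>J. g (\<omega> i)) \<partial>disorder \<mu>) = (\<integral>x. g x \<partial>\<mu>) ^ card J"
proof -
  interpret product_sigma_finite "\<lambda>_. \<mu>"
    unfolding product_sigma_finite_def using prob prob_space_imp_sigma_finite by blast
  have [measurable]: "g \<in> borel_measurable \<mu>" using g by auto
  have distr: "distr (disorder \<mu>) (PiM J (\<lambda>_. \<mu>)) (\<lambda>\<omega>. \<lambda>n\<in>J. \<omega> n) = PiM J (\<lambda>_. \<mu>)"
    unfolding disorder_def using distr_PiM_reindex[of UNIV "\<lambda>_. \<mu>" "\<lambda>n. n" J] prob by simp
  have restr: "(\<lambda>\<omega>. \<lambda>n\<in>J. \<omega> n) \<in> measurable (disorder \<mu>) (PiM J (\<lambda>_. \<mu>))"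
    unfolding disorder_def by (intro measurable_restrict measurable_component_singleton) auto
  have G: "(\<lambda>x. \<Prod>i\<in>J. g (x i)) \<in> borel_measurable (PiM J (\<lambda>_. \<mu>))"
    by (intro borel_measurable_prod measurable_compose[OF measurable_component_singleton]) auto
  have restrict: "(\<lambda>\<omega>. \<Prod>i\<in>J. g ((\<lambda>n\<in>J. \<omega> n) i)) = (\<lambda>\<omega>. \<Prod>i\<in>J. g (\<omega> i))"
    by (intro ext prod.cong) auto
  have "integrable (PiM J (\<lambda>_. \<mu>)) (\<lambda>x. \<Prod>i\<in>J. g (x i))"
    by (rule product_integrable_prod[OF J]) (use g in auto)
  then show "integrable (disorder \<mu>) (\<lambda>\<omega>. \<Prod>i\<in>J. g (\<omega> i))"
    using integrable_distr_eq[OF restr G] distr restrict by simp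
  have "(\<integral>\<omega>. (\<Prod>i\<in>J. g (\<omega> i)) \<partial>disorder \<mu>) = (\<integral>x. (\<Prod>i\<in>J. g (x i)) \<partial>PiM J (\<lambda>_. \<mu>))"
    using integral_distr[OF restr G] distr restrict by simp
  also have "\<dots> = (\<Prod>i\<in>J. \<integral>x. g x \<partial>\<mu>)"
    by (rule product_integral_prod[OF J]) (use g in auto)
  finally show "(\<integral>\<omega>. (\<Prod>i\<in>J. g (\<omega> i)) \<partial>disorder \<mu>) = (\<integral>x. g x \<partial>\<mu>) ^ card J" by simp
qed

lemma integral_component:
  fixes g :: "real \<Rightarrow> real"
  assumes "integrable \<mu> g"
  shows "integrable (disorder \<mu>) (\<lambda>\<omega>. g (\<omega> n))"
    and "(\<integral>\<omega>. g (\<omega> n) \<partial>disorder \<mu>) = (\<integral>x. g x \<partial>\<mu>)"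
  using integral_prod_components[of "{n}" g] assms by simp_all

lemma measurable_bridge_Z [measurable]: "bridge_Z lam h N \<in> borel_measurable (disorder \<mu>)"
  unfolding bridge_Z_def path_energy_def by measurable

lemma measurable_copolymer_Z [measurable]: "copolymer_Z lam h N \<in> borel_measurable (disorder \<mu>)"
  unfolding copolymer_Z_def by measurable

end

lemma integrable_sandwich:
  fixes f g :: "'a \<Rightarrow> real"
  assumes "finite_measure M" "integrable M g" "f \<in> borel_measurable M"
    and "\<And>x. a \<le> f x" "\<And>x. f x \<le> g x"
  shows "integrable M f"
proof -
  interpret finite_measure M by fact
  have "integrable M (\<lambda>x. \<bar>a\<bar> + \<bar>g x\<bar>)" using assms(2) by auto
  then show ?thesis
  proof (rule Bochner_Integration.integrable_bound)
    have "norm (f x) \<le> norm (\<bar>a\<bar> + \<bar>g x\<bar>)" for x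
      using assms(4,5)[of x] by (simp add: abs_le_iff) linarith
    then show "AE x in M. norm (f x) \<le> norm (\<bar>a\<bar> + \<bar>g x\<bar>)" by simp
  qed fact
qed

section \<open>Fekete's lemma\<close>

lemma superadditive_mult_add:
  fixes b :: "nat \<Rightarrow> real"
  assumes sup: "\<And>k j. b k + b j \<le> b (k + j)"
  shows "real q * b m + b r \<le> b (q * m + r)"
proof (induction q)
  case (Suc q)
  have "b m + b (q * m + r) \<le> b (Suc q * m + r)"
    using sup[of m "q * m + r"] by (simp add: algebra_simps)
  with Suc show ?case by (simp add: algebra_simps)
qed simp

lemma superadditive_ratio_lower:
  fixes b :: "nat \<Rightarrow> real"
  assumes sup: "\<And>k j. b k + b j \<le> b (k + j)" and m: "m \<ge> 1" and k: "k \<ge> 1"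
  shows "b m / real m - (\<bar>b m\<bar> + (\<Sum>r<m. \<bar>b r\<bar>)) / real k \<le> b k / real k"
proof -
  define q where "q = k div m"
  define r where "r = k mod m"
  have kqr: "k = q * m + r" and rm: "r < m" using m by (simp_all add: q_def r_def)
  have "\<bar>b r\<bar> \<le> (\<Sum>r<m. \<bar>b r\<bar>)" using rm by (intro member_le_sum) auto
  moreover have "real q * b m + b r \<le> b k"
    using superadditive_mult_add[OF sup, of q m r] kqr by simp
  ultimately have bk: "real q * b m - (\<Sum>r<m. \<bar>b r\<bar>) \<le> b k" by linarith
  have qm: "real k - real m \<le> real q * real m" "real q * real m \<le> real k"
    using kqr rm by (simp_all add: of_nat_less_iff[symmetric])
  have "b m / real m * real k - \<bar>b m\<bar> \<le> real q * b m"
  proof (cases "b m \<ge> 0")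
    case True
    have "b m / real m * real k - \<bar>b m\<bar> = b m / real m * (real k - real m)"
      using True m by (simp add: field_simps)
    also have "\<dots> \<le> b m / real m * (real q * real m)"
      using True qm(1) by (intro mult_left_mono) auto
    finally show ?thesis using m by (simp add: mult.commute)
  next
    case False
    have "real q * b m = b m / real m * (real q * real m)" using m by simp
    also have "\<dots> \<ge> b m / real m * real k"
      using False qm(2) m by (intro mult_left_mono_neg) (auto simp: divide_nonpos_pos)
    finally show ?thesis by simp
  qed
  with bk have "b m / real m * real k - (\<bar>b m\<bar> + (\<Sum>r<m. \<bar>b r\<bar>)) \<le> b k" by linarith
  then have "(b m / real m * real k - (\<bar>b m\<bar> + (\<Sum>r<m. \<bar>b r\<bar>))) / real k \<le> b k / real k"
    using k by (intro divide_right_mono) auto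
  then show ?thesis using k by (simp add: diff_divide_distrib)
qed

theorem fekete_superadditive:
  fixes b :: "nat \<Rightarrow> real"
  assumes sup: "\<And>k j. b k + b j \<le> b (k + j)" and bounded: "\<And>k. b k \<le> C * real k"
  shows "(\<lambda>k. b k / real k) \<longlonglongrightarrow> (SUP k\<in>{1..}. b k / real k)"
    and "k \<ge> 1 \<Longrightarrow> b k / real k \<le> (SUP k\<in>{1..}. b k / real k)"
proof -
  let ?L = "SUP k\<in>{1..}. b k / real k"
  have bdd: "bdd_above ((\<lambda>k. b k / real k) ` {1..})"
    using bounded by (intro bdd_aboveI2[of _ _ C]) (simp add: divide_le_eq mult.commute)
  show upper: "b k / real k \<le> ?L" if "k \<ge> 1" for k
    using that by (intro cSUP_upper[OF _ bdd]) simp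
  show "(\<lambda>k. b k / real k) \<longlonglongrightarrow> ?L"
  proof (rule order_tendstoI)
    fix a assume "a < ?L"
    then obtain m where m: "m \<ge> 1" "a < b m / real m"
      using less_cSUP_iff[OF _ bdd] by auto
    let ?D = "\<bar>b m\<bar> + (\<Sum>r<m. \<bar>b r\<bar>)"
    have "(\<lambda>k. b m / real m - ?D / real k) \<longlonglongrightarrow> b m / real m - 0"
      by (intro tendsto_intros)
    then have "\<forall>\<^sub>F k in sequentially. a < b m / real m - ?D / real k"
      using m(2) by (intro order_tendstoD) auto
    moreover have "\<forall>\<^sub>F k in sequentially. k \<ge> 1" by (rule eventually_ge_at_top)
    ultimately show "\<forall>\<^sub>F k in sequentially. a < b k / real k"
      by eventually_elim (use superadditive_ratio_lower[OF sup m(1)] in fastforce)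
  next
    fix a assume "?L < a"
    have "\<forall>\<^sub>F k in sequentially. k \<ge> 1" by (rule eventually_ge_at_top)
    then show "\<forall>\<^sub>F k in sequentially. b k / real k < a"
      by eventually_elim (use upper \<open>?L < a\<close> in fastforce)
  qed
qed

section \<open>The free energy as a supremum over bridges\<close>

lemma ln_bridge_Z_bounds:
  fixes lam h :: real and k :: nat and \<omega> :: "nat \<Rightarrow> real"
  shows "ln (excursion_prob k) \<le> ln (bridge_Z lam h (2 * k) \<omega>)"
    and "ln (bridge_Z lam h (2 * k) \<omega>) \<le> ln (copolymer_Z lam h (2 * k) \<omega>)"
    and "ln (copolymer_Z lam h (2 * k) \<omega>)
      \<le> ln (bridge_Z lam h (2 * k) \<omega>) + ln (2 * (real k + 1) powr (3/2) * (2 * real k + 1))"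
    and "lam \<ge> 0 \<Longrightarrow> ln (copolymer_Z lam h (2 * k) \<omega>) \<le> 2 * lam * (\<Sum>n=1..2 * k. \<bar>\<omega> n + h\<bar>)"
proof -
  let ?K = "2 * (real k + 1) powr (3/2) * (2 * real k + 1)"
  have pos: "0 < excursion_prob k" "0 < bridge_Z lam h (2 * k) \<omega>" "0 < copolymer_Z lam h (2 * k) \<omega>"
    using excursion_prob_pos[of k] bridge_Z_pos[of lam h k \<omega>] bridge_Z_le_copolymer_Z[of lam h "2 * k" \<omega>]
    by linarith+
  show "ln (excursion_prob k) \<le> ln (bridge_Z lam h (2 * k) \<omega>)"
    using pos excursion_prob_le_bridge_Z by simp
  show "ln (bridge_Z lam h (2 * k) \<omega>) \<le> ln (copolymer_Z lam h (2 * k) \<omega>)"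
    using pos bridge_Z_le_copolymer_Z by simp
  have "ln (copolymer_Z lam h (2 * k) \<omega>) \<le> ln (?K * bridge_Z lam h (2 * k) \<omega>)"
    using pos copolymer_Z_le_bridge_Z[of lam h k \<omega>] by (intro ln_mono) auto
  also have "\<dots> = ln (bridge_Z lam h (2 * k) \<omega>) + ln ?K"
    using pos by (simp add: ln_mult add_pos_nonneg)
  finally show "ln (copolymer_Z lam h (2 * k) \<omega>) \<le> ln (bridge_Z lam h (2 * k) \<omega>) + ln ?K" .
  assume "lam \<ge> 0"
  then show "ln (copolymer_Z lam h (2 * k) \<omega>) \<le> 2 * lam * (\<Sum>n=1..2 * k. \<bar>\<omega> n + h\<bar>)"
    using pos copolymer_Z_le_exp[of lam h "2 * k" \<omega>] by (metis ln_exp ln_mono)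
qed

context
  fixes \<mu> :: "real measure" and lam h :: real
  assumes prob: "prob_space \<mu>" and borel: "sets \<mu> = sets borel"
    and integrable_id: "integrable \<mu> (\<lambda>x. x)" and lam: "lam \<ge> 0"
begin

interpretation mu: prob_space \<mu> by (rule prob)
interpretation D: prob_space "disorder \<mu>" by (rule prob_space_disorder[OF prob borel])

lemma integrable_abs_plus: "integrable \<mu> (\<lambda>x. \<bar>x + h\<bar>)"
  using integrable_id by auto

lemma integrable_sum_abs: "integrable (disorder \<mu>) (\<lambda>\<omega>. \<Sum>n=1..N. \<bar>\<omega> n + h\<bar>)"
  using integral_component(1)[OF prob borel integrable_abs_plus] by auto

lemma integral_sum_abs:
  "(\<integral>\<omega>. (\<Sum>n=1..N. \<bar>\<omega> n + h\<bar>) \<partial>disorder \<mu>) = real N * (\<integral>x. \<bar>x + h\<bar> \<partial>\<mu>)"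
proof -
  have "(\<integral>\<omega>. (\<Sum>n=1..N. \<bar>\<omega> n + h\<bar>) \<partial>disorder \<mu>) = (\<Sum>n=1..N. \<integral>\<omega>. \<bar>\<omega> n + h\<bar> \<partial>disorder \<mu>)"
    by (rule Bochner_Integration.integral_sum) (rule integral_component(1)[OF prob borel integrable_abs_plus])
  also have "\<dots> = (\<Sum>n=1..N. \<integral>x. \<bar>x + h\<bar> \<partial>\<mu>)"
    using integral_component(2)[OF prob borel integrable_abs_plus] by simp
  finally show ?thesis by simp
qed

lemma integrable_ln_bridge_Z: "integrable (disorder \<mu>) (\<lambda>\<omega>. ln (bridge_Z lam h (2 * k) \<omega>))"
proof (rule integrable_sandwich)
  show "ln (excursion_prob k) \<le> ln (bridge_Z lam h (2 * k) \<omega>)" for \<omega>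
    by (rule ln_bridge_Z_bounds(1))
  show "ln (bridge_Z lam h (2 * k) \<omega>) \<le> 2 * lam * (\<Sum>n=1..2 * k. \<bar>\<omega> n + h\<bar>)" for \<omega>
    using ln_bridge_Z_bounds(2,4)[where lam = lam and h = h and k = k and \<omega> = \<omega>] lam by linarith
  show "integrable (disorder \<mu>) (\<lambda>\<omega>. 2 * lam * (\<Sum>n=1..2 * k. \<bar>\<omega> n + h\<bar>))"
    using integrable_sum_abs by simp
  show "(\<lambda>\<omega>. ln (bridge_Z lam h (2 * k) \<omega>)) \<in> borel_measurable (disorder \<mu>)"
    using measurable_bridge_Z[OF prob borel] by measurable
qed (rule D.finite_measure_axioms)

lemma integrable_ln_copolymer_Z: "integrable (disorder \<mu>) (\<lambda>\<omega>. ln (copolymer_Z lam h (2 * k) \<omega>))"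
proof (rule integrable_sandwich)
  show "ln (excursion_prob k) \<le> ln (copolymer_Z lam h (2 * k) \<omega>)" for \<omega>
    using ln_bridge_Z_bounds(1,2)[where lam = lam and h = h and k = k and \<omega> = \<omega>] by linarith
  show "ln (copolymer_Z lam h (2 * k) \<omega>) \<le> 2 * lam * (\<Sum>n=1..2 * k. \<bar>\<omega> n + h\<bar>)" for \<omega>
    using ln_bridge_Z_bounds(4) lam by blast
  show "integrable (disorder \<mu>) (\<lambda>\<omega>. 2 * lam * (\<Sum>n=1..2 * k. \<bar>\<omega> n + h\<bar>))"
    using integrable_sum_abs by simp
  show "(\<lambda>\<omega>. ln (copolymer_Z lam h (2 * k) \<omega>)) \<in> borel_measurable (disorder \<mu>)"
    using measurable_copolymer_Z[OF prob borel] by measurable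
qed (rule D.finite_measure_axioms)

definition mean_log_bridge_Z :: "nat \<Rightarrow> real" where
  "mean_log_bridge_Z k = (\<integral>\<omega>. ln (bridge_Z lam h (2 * k) \<omega>) \<partial>disorder \<mu>)"

lemma mean_log_bridge_Z_superadditive:
  "mean_log_bridge_Z k + mean_log_bridge_Z j \<le> mean_log_bridge_Z (k + j)"
proof -
  have [measurable]: "(\<lambda>\<omega>. ln (bridge_Z lam h (2 * j) \<omega>)) \<in> borel_measurable (disorder \<mu>)"
    using measurable_bridge_Z[OF prob borel] by measurable
  have shifted: "integrable (disorder \<mu>) (\<lambda>\<omega>. ln (bridge_Z lam h (2 * j) (shift_seq (2 * k) \<omega>)))"
    by (rule integrable_shift_seq[OF prob borel _ integrable_ln_bridge_Z]) measurable
  have "(\<integral>\<omega>. ln (bridge_Z lam h (2 * k) \<omega>) + ln (bridge_Z lam h (2 * j) (shift_seq (2 * k) \<omega>))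
      \<partial>disorder \<mu>) \<le> mean_log_bridge_Z (k + j)"
    unfolding mean_log_bridge_Z_def
    by (intro integral_mono integrable_ln_bridge_Z Bochner_Integration.integrable_add shifted
        ln_bridge_Z_supermult)
  moreover have "(\<integral>\<omega>. ln (bridge_Z lam h (2 * j) (shift_seq (2 * k) \<omega>)) \<partial>disorder \<mu>)
      = mean_log_bridge_Z j"
    unfolding mean_log_bridge_Z_def by (rule integral_shift_seq[OF prob borel]) measurable
  ultimately show ?thesis
    unfolding mean_log_bridge_Z_def using integrable_ln_bridge_Z shifted by simp
qed

lemma mean_log_bridge_Z_le:
  "mean_log_bridge_Z k \<le> (\<integral>\<omega>. ln (copolymer_Z lam h (2 * k) \<omega>) \<partial>disorder \<mu>)"
  unfolding mean_log_bridge_Z_def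
  by (intro integral_mono integrable_ln_bridge_Z integrable_ln_copolymer_Z ln_bridge_Z_bounds(2))

lemma mean_log_bridge_Z_le_linear:
  "mean_log_bridge_Z k \<le> (4 * lam * (\<integral>x. \<bar>x + h\<bar> \<partial>\<mu>)) * real k"
proof -
  have "(\<integral>\<omega>. ln (copolymer_Z lam h (2 * k) \<omega>) \<partial>disorder \<mu>)
      \<le> (\<integral>\<omega>. 2 * lam * (\<Sum>n=1..2 * k. \<bar>\<omega> n + h\<bar>) \<partial>disorder \<mu>)"
    by (intro integral_mono integrable_ln_copolymer_Z ln_bridge_Z_bounds(4) lam)
       (use integrable_sum_abs in auto)
  also have "\<dots> = 2 * lam * (real (2 * k) * (\<integral>x. \<bar>x + h\<bar> \<partial>\<mu>))"
    by (simp only: integral_mult_right_zero integral_sum_abs)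
  finally show ?thesis
    using mean_log_bridge_Z_le[of k] by (simp add: algebra_simps)
qed

theorem free_energy_eq_SUP:
  "free_energy \<mu> lam h = (SUP k\<in>{1..}. mean_log_bridge_Z k / real k) / 2"
proof -
  let ?S = "SUP k\<in>{1..}. mean_log_bridge_Z k / real k"
  let ?Z = "\<lambda>k. (\<integral>\<omega>. ln (copolymer_Z lam h (2 * k) \<omega>) \<partial>disorder \<mu>)"
  let ?K = "\<lambda>k::nat. ln (2 * (real k + 1) powr (3/2) * (2 * real k + 1))"
  have above: "?Z k \<le> mean_log_bridge_Z k + ?K k" for k
  proof -
    have "?Z k \<le> (\<integral>\<omega>. ln (bridge_Z lam h (2 * k) \<omega>) + ?K k \<partial>disorder \<mu>)"
      by (intro integral_mono integrable_ln_copolymer_Z ln_bridge_Z_bounds(3))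
         (use integrable_ln_bridge_Z in auto)
    then show ?thesis
      unfolding mean_log_bridge_Z_def using integrable_ln_bridge_Z by (simp add: D.prob_space)
  qed
  have "(\<lambda>k. mean_log_bridge_Z k / real k) \<longlonglongrightarrow> ?S"
    by (rule fekete_superadditive(1)[OF mean_log_bridge_Z_superadditive mean_log_bridge_Z_le_linear])
  then have "(\<lambda>k. (mean_log_bridge_Z k / real k) / 2) \<longlonglongrightarrow> ?S / 2"
    by (intro tendsto_divide) auto
  moreover have "(\<lambda>k. (mean_log_bridge_Z k / real k) / 2) = (\<lambda>k. mean_log_bridge_Z k / real (2 * k))"
    by (simp add: fun_eq_iff)
  ultimately have lo: "(\<lambda>k. mean_log_bridge_Z k / real (2 * k)) \<longlonglongrightarrow> ?S / 2" by simp
  have "(\<lambda>k. ?K k / real (2 * k)) \<longlonglongrightarrow> 0" by real_asymp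
  from tendsto_add[OF lo this]
  have hi: "(\<lambda>k. (mean_log_bridge_Z k + ?K k) / real (2 * k)) \<longlonglongrightarrow> ?S / 2"
    by (simp add: add_divide_distrib)
  have "(\<lambda>k. ?Z k / real (2 * k)) \<longlonglongrightarrow> ?S / 2"
    using mean_log_bridge_Z_le above
    by (intro tendsto_sandwich[OF _ _ lo hi] always_eventually allI divide_right_mono) auto
  then show ?thesis unfolding free_energy_def by (rule limI)
qed

corollary free_energy_pos:
  assumes "k \<ge> 1" and "mean_log_bridge_Z k > 0"
  shows "free_energy \<mu> lam h > 0"
proof -
  have "0 < mean_log_bridge_Z k / real k" using assms by simp
  also have "\<dots> \<le> (SUP k\<in>{1..}. mean_log_bridge_Z k / real k)"
    by (rule fekete_superadditive(2)[OF mean_log_bridge_Z_superadditive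
          mean_log_bridge_Z_le_linear assms(1)])
  finally show ?thesis unfolding free_energy_eq_SUP by simp
qed

end

section \<open>The rare-stretch strategy\<close>

lemma ln_le_tangent:
  fixes x a :: real
  assumes "x > 0" "a > 0"
  shows "ln x \<le> ln a + x / a - 1"
  using ln_le_minus_one[of "x / a"] assms by (simp add: ln_div)

definition excursion_cost :: "real \<Rightarrow> real" where
  "excursion_cost a = ln 2 + 3/2 * (ln a - 1) + 3/2 / a"

text \<open>Bounding \<open>ln (m + 1)\<close> by its tangent at \<open>a\<close> makes the cost of a positive excursion
  linear, hence additive, in its length.\<close>

lemma ln_excursion_prob_ge_tangent:
  assumes "a > 0"
  shows "- 3/2 * real m / a - excursion_cost a \<le> ln (excursion_prob m)"
proof -
  have "ln (real m + 1) \<le> ln a + (real m + 1) / a - 1" using assms by (intro ln_le_tangent) auto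
  then have "- 3/2 * real m / a - excursion_cost a \<le> - ln 2 - 3/2 * ln (real m + 1)"
    unfolding excursion_cost_def using assms by (simp add: field_simps)
  then show ?thesis using ln_excursion_prob_lower_bound[of m] by linarith
qed

lemma ln_bridge_Z_ge_tangent:
  assumes "a > 0"
  shows "- 3/2 * real m / a - excursion_cost a \<le> ln (bridge_Z lam h (2 * m) \<omega>)"
  using ln_excursion_prob_ge_tangent[OF assms, of m] ln_bridge_Z_bounds(1)[of m lam h \<omega>] by linarith

definition block_gain :: "real \<Rightarrow> real \<Rightarrow> nat \<Rightarrow> (nat \<Rightarrow> real) \<Rightarrow> real" where
  "block_gain lam h L \<omega> = -2 * lam * (\<Sum>n=1..2 * L. \<omega> n + h)"

lemma ln_bridge_Z_ge_block_gain:
  "ln (excursion_prob L) + block_gain lam h L \<omega> \<le> ln (bridge_Z lam h (2 * L) \<omega>)"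
proof -
  have "excursion_prob L * exp (block_gain lam h L \<omega>) \<le> bridge_Z lam h (2 * L) \<omega>"
    unfolding block_gain_def by (rule neg_excursion_le_bridge_Z)
  then have "ln (excursion_prob L * exp (block_gain lam h L \<omega>)) \<le> ln (bridge_Z lam h (2 * L) \<omega>)"
    using excursion_prob_pos[of L] by (intro ln_mono) auto
  then show ?thesis using excursion_prob_pos[of L] by (simp add: ln_mult)
qed

text \<open>The strategy visits the lower half-plane during a block of length \<open>2 * L\<close> exactly when the
  block gain is at least \<open>\<theta>\<close>, and otherwise stays in the upper half-plane.\<close>

definition strategy_gain :: "real \<Rightarrow> real \<Rightarrow> nat \<Rightarrow> real \<Rightarrow> real \<Rightarrow> (nat \<Rightarrow> real) \<Rightarrow> real" where
  "strategy_gain lam h L \<theta> a \<omega> =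
     (if block_gain lam h L \<omega> \<ge> \<theta> then block_gain lam h L \<omega> + ln (excursion_prob L) - excursion_cost a
      else - 3/2 * real L / a)"

text \<open>In the induction, the first \<open>g\<close> blocks are unselected ones still covered by the current
  positive excursion.\<close>

lemma ln_bridge_Z_ge_strategy_pending:
  assumes a: "a > 0"
  shows "- 3/2 * real (g * L) / a + (\<Sum>i<r. strategy_gain lam h L \<theta> a (shift_seq ((g + i) * (2 * L)) \<omega>))
    - excursion_cost a \<le> ln (bridge_Z lam h (2 * ((g + r) * L)) \<omega>)"
proof (induction r arbitrary: g \<omega>)
  case 0
  show ?case using ln_bridge_Z_ge_tangent[OF a, of "g * L"] by simp
next
  case (Suc r)
  let ?\<phi> = "\<lambda>\<omega>. strategy_gain lam h L \<theta> a \<omega>"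
  let ?\<omega>g = "shift_seq (g * (2 * L)) \<omega>"
  have sum: "(\<Sum>i<Suc r. ?\<phi> (shift_seq ((g + i) * (2 * L)) \<omega>))
      = ?\<phi> ?\<omega>g + (\<Sum>i<r. ?\<phi> (shift_seq ((Suc g + i) * (2 * L)) \<omega>))"
    unfolding sum.lessThan_Suc_shift by simp
  show ?case
  proof (cases "block_gain lam h L ?\<omega>g \<ge> \<theta>")
    case True
    let ?A = "bridge_Z lam h (2 * (g * L)) \<omega>"
    let ?B = "bridge_Z lam h (2 * L) ?\<omega>g"
    let ?C = "bridge_Z lam h (2 * (r * L)) (shift_seq (Suc g * (2 * L)) \<omega>)"
    have "ln ?B + ln ?C \<le> ln (bridge_Z lam h (2 * (L + r * L)) ?\<omega>g)"
      using ln_bridge_Z_supermult[of lam h L ?\<omega>g "r * L"] by (simp add: algebra_simps)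
    moreover have "ln ?A + ln (bridge_Z lam h (2 * (L + r * L)) ?\<omega>g)
        \<le> ln (bridge_Z lam h (2 * ((g + Suc r) * L)) \<omega>)"
      using ln_bridge_Z_supermult[of lam h "g * L" \<omega> "L + r * L"] by (simp add: algebra_simps)
    ultimately have "ln ?A + ln ?B + ln ?C \<le> ln (bridge_Z lam h (2 * ((g + Suc r) * L)) \<omega>)"
      by linarith
    moreover have "- 3/2 * real (g * L) / a - excursion_cost a \<le> ln ?A"
      by (rule ln_bridge_Z_ge_tangent[OF a])
    moreover have "ln (excursion_prob L) + block_gain lam h L ?\<omega>g \<le> ln ?B"
      by (rule ln_bridge_Z_ge_block_gain)
    moreover have "(\<Sum>i<r. ?\<phi> (shift_seq ((Suc g + i) * (2 * L)) \<omega>)) - excursion_cost a \<le> ln ?C"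
      using Suc.IH[of 0 "shift_seq (Suc g * (2 * L)) \<omega>"] by (simp add: algebra_simps)
    ultimately show ?thesis
      unfolding sum using True by (simp add: strategy_gain_def)
  next
    case False
    have "- 3/2 * real (Suc g * L) / a = - 3/2 * real (g * L) / a + ?\<phi> ?\<omega>g"
      using False a by (simp add: strategy_gain_def field_simps)
    then show ?thesis
      unfolding sum using Suc.IH[of "Suc g" \<omega>] by simp
  qed
qed

theorem ln_bridge_Z_ge_strategy:
  assumes "a > 0"
  shows "(\<Sum>i<J. strategy_gain lam h L \<theta> a (shift_seq (i * (2 * L)) \<omega>)) - excursion_cost a
    \<le> ln (bridge_Z lam h (2 * (J * L)) \<omega>)"
  using ln_bridge_Z_ge_strategy_pending[OF assms, where g = 0 and r = J] by simp

lemma exp_le_layer_sum: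
  fixes y \<beta> :: real
  assumes "\<beta> > 0"
  shows "exp (\<beta> * y)
    \<le> 1 + (\<Sum>i<n. exp (\<beta> * (real i + 1)) * (if y \<ge> real i then 1 else 0)) + exp (2 * \<beta> * y - \<beta> * real n)"
proof -
  let ?S = "\<Sum>i<n. exp (\<beta> * (real i + 1)) * (if y \<ge> real i then 1 else (0::real))"
  have S: "0 \<le> ?S" by (intro sum_nonneg) auto
  consider "y < 0" | "real n \<le> y" | "0 \<le> y" "y < real n" by linarith
  then show ?thesis
  proof cases
    case 1
    then have "exp (\<beta> * y) \<le> 1" using assms by (simp add: mult_pos_neg less_imp_le)
    moreover have "0 < exp (2 * \<beta> * y - \<beta> * real n)" by simp
    ultimately show ?thesis using S by linarith
  next
    case 2
    then have "\<beta> * y \<le> 2 * \<beta> * y - \<beta> * real n" using assms by (simp add: algebra_simps)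
    then have "exp (\<beta> * y) \<le> exp (2 * \<beta> * y - \<beta> * real n)" by simp
    then show ?thesis using S by linarith
  next
    case 3
    define i where "i = nat \<lfloor>y\<rfloor>"
    have i: "real i \<le> y" "y < real i + 1" "i < n" using 3 unfolding i_def by linarith+
    have "exp (\<beta> * y) \<le> exp (\<beta> * (real i + 1)) * (if y \<ge> real i then 1 else 0)"
      using i assms by simp
    also have "\<dots> \<le> ?S"
      by (rule member_le_sum[of i "{..<n}" "\<lambda>i. exp (\<beta> * (real i + 1)) * (if y \<ge> real i then 1 else 0)"])
         (use i in auto)
    moreover have "0 < exp (2 * \<beta> * y - \<beta> * real n)" by simp
    ultimately show ?thesis by linarith
  qed
qed

definition level_offset :: "nat \<Rightarrow> real" where
  "level_offset L = 2 * ln (real L + 1) + 3"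

lemma level_parameters:
  fixes m1 m2 :: real
  assumes m1: "m1 > 1" and m2: "m2 > 0"
  obtains L n :: nat where "L \<ge> 1"
    and "2 + real n * exp (2/3 + level_offset L) < m1 ^ (2 * L)"
    and "m2 ^ (2 * L) \<le> exp (2/3 * real n)"
proof -
  define K0 :: nat where "K0 = nat \<lceil>ln m2\<rceil>"
  define K where "K = 3 * (real K0 + 1) * exp (11/3)"
  have "((\<lambda>x::real. (2 + K * x * (x + 1)\<^sup>2) / exp (2 * x * ln m1)) \<longlongrightarrow> 0) at_top"
    using m1 by real_asymp
  then have "\<forall>\<^sub>F x in at_top. (2 + K * x * (x + 1)\<^sup>2) / exp (2 * x * ln m1) < 1"
    by (rule order_tendstoD) simp
  then obtain X0 where X0: "\<And>x. x \<ge> X0 \<Longrightarrow> (2 + K * x * (x + 1)\<^sup>2) / exp (2 * x * ln m1) < 1"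
    by (auto simp: eventually_at_top_linorder)
  define L :: nat where "L = nat \<lceil>X0\<rceil> + 1"
  define n where "n = 3 * L * K0"
  have "X0 \<le> real L" unfolding L_def by linarith
  from X0[OF this] have "2 + K * real L * (real L + 1)\<^sup>2 < exp (real (2 * L) * ln m1)"
    by simp
  also have "\<dots> = m1 ^ (2 * L)" using m1 exp_of_nat_mult[of "2 * L" "ln m1"] by simp
  finally have big: "2 + K * real L * (real L + 1)\<^sup>2 < m1 ^ (2 * L)" .
  have "exp (2/3 + level_offset L) = exp (11/3) * exp (real 2 * ln (real L + 1))"
    unfolding level_offset_def by (simp flip: exp_add)
  also have "\<dots> = exp (11/3) * (real L + 1)\<^sup>2"
    by (simp only: exp_of_nat_mult) simp
  finally have "real n * exp (2/3 + level_offset L) = 3 * real K0 * exp (11/3) * real L * (real L + 1)\<^sup>2"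
    unfolding n_def by simp
  also have "\<dots> \<le> K * real L * (real L + 1)\<^sup>2"
    unfolding K_def by (intro mult_right_mono) auto
  finally have first: "2 + real n * exp (2/3 + level_offset L) < m1 ^ (2 * L)" using big by linarith
  have "m2 ^ (2 * L) = exp (real (2 * L) * ln m2)" using m2 exp_of_nat_mult[of "2 * L" "ln m2"] by simp
  also have "\<dots> \<le> exp (real (2 * L) * real K0)"
    unfolding K0_def by (intro exp_mono mult_left_mono) linarith+
  also have "real (2 * L) * real K0 = 2/3 * real n" unfolding n_def by simp
  finally have "m2 ^ (2 * L) \<le> exp (2/3 * real n)" .
  moreover have "L \<ge> 1" unfolding L_def by simp
  ultimately show ?thesis using first that by blast
qed

lemma exp_mult_plus: "exp (g * (x + h)) = exp (g * h) * exp (g * (x :: real))"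
  by (simp add: distrib_left add.commute flip: exp_add)

context
  fixes \<mu> :: "real measure" and lam h :: real
  assumes prob: "prob_space \<mu>" and borel: "sets \<mu> = sets borel"
    and exp_integrable: "\<And>\<alpha>. integrable \<mu> (\<lambda>x. exp (\<alpha> * x))"
begin

interpretation mu: prob_space \<mu> by (rule prob)
interpretation D: prob_space "disorder \<mu>" by (rule prob_space_disorder[OF prob borel])

lemma integrable_identity: "integrable \<mu> (\<lambda>x. x)"
proof (rule Bochner_Integration.integrable_bound)
  show "integrable \<mu> (\<lambda>x. exp (1 * x) + exp ((-1) * x))"
    using exp_integrable[of 1] exp_integrable[of "-1"] by auto
  have "\<bar>x\<bar> \<le> exp x + exp (- x)" for x :: real
  proof -
    have "\<bar>x\<bar> \<le> exp \<bar>x\<bar>" using exp_ge_add_one_self[of "\<bar>x\<bar>"] by linarith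
    also have "\<dots> \<le> exp x + exp (- x)" by (cases "x \<ge> 0") auto
    finally show ?thesis .
  qed
  then show "AE x in \<mu>. norm x \<le> norm (exp (1 * x) + exp ((-1) * x))"
    by (intro AE_I2) simp
qed (rule measurable_ident_sets[OF borel])

lemma mgf_ge_1:
  assumes "(\<integral>x. x \<partial>\<mu>) = 0"
  shows "1 \<le> mgf \<mu> g"
proof -
  have "(\<integral>x. 1 + g * x \<partial>\<mu>) \<le> mgf \<mu> g"
    unfolding mgf_def using integrable_identity exp_integrable
    by (intro integral_mono) (auto intro: exp_ge_add_one_self)
  moreover have "(\<integral>x. 1 + g * x \<partial>\<mu>) = 1"
    using integrable_identity assms by (simp add: mu.prob_space)
  ultimately show ?thesis by simp
qed

lemma measurable_block_gain [measurable]: "block_gain lam h L \<in> borel_measurable (disorder \<mu>)"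
  unfolding block_gain_def using measurable_disorder_component[OF prob borel] by measurable

lemma integral_exp_block_gain:
  shows "integrable (disorder \<mu>) (\<lambda>\<omega>. exp (t * block_gain lam h L \<omega>))"
    and "(\<integral>\<omega>. exp (t * block_gain lam h L \<omega>) \<partial>disorder \<mu>)
      = (exp (-2 * lam * t * h) * mgf \<mu> (-2 * lam * t)) ^ (2 * L)"
proof -
  have "integrable \<mu> (\<lambda>x. exp (-2 * lam * t * h) * exp (-2 * lam * t * x))"
    using exp_integrable[of "-2 * lam * t"] by simp
  then have int: "integrable \<mu> (\<lambda>x. exp (-2 * lam * t * (x + h)))"
    by (simp only: exp_mult_plus)
  have eq: "(\<lambda>\<omega>. exp (t * block_gain lam h L \<omega>))
      = (\<lambda>\<omega>. \<Prod>n\<in>{1..2 * L}. exp (-2 * lam * t * (\<omega> n + h)))"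
    unfolding block_gain_def by (simp add: fun_eq_iff exp_sum[symmetric] sum_distrib_left mult_ac)
  show "integrable (disorder \<mu>) (\<lambda>\<omega>. exp (t * block_gain lam h L \<omega>))"
    unfolding eq by (rule integral_prod_components(1)[OF prob borel _ int]) simp
  show "(\<integral>\<omega>. exp (t * block_gain lam h L \<omega>) \<partial>disorder \<mu>)
      = (exp (-2 * lam * t * h) * mgf \<mu> (-2 * lam * t)) ^ (2 * L)"
  proof -
    have "(\<integral>\<omega>. (\<Prod>n\<in>{1..2 * L}. exp (-2 * lam * t * (\<omega> n + h))) \<partial>disorder \<mu>)
        = (\<integral>x. exp (-2 * lam * t * (x + h)) \<partial>\<mu>) ^ (2 * L)"
      using integral_prod_components(2)[OF prob borel _ int, of "{1..2 * L}"] by simp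
    moreover have "(\<integral>x. exp (-2 * lam * t * (x + h)) \<partial>\<mu>) = exp (-2 * lam * t * h) * mgf \<mu> (-2 * lam * t)"
      unfolding mgf_def exp_mult_plus by simp
    ultimately show ?thesis unfolding eq by simp
  qed
qed

definition block_tail_prob :: "nat \<Rightarrow> real \<Rightarrow> real" where
  "block_tail_prob L t = (\<integral>\<omega>. (if block_gain lam h L \<omega> \<ge> t then 1 else 0) \<partial>disorder \<mu>)"

lemma integrable_block_tail:
  "integrable (disorder \<mu>) (\<lambda>\<omega>. if block_gain lam h L \<omega> \<ge> t then 1 else (0::real))"
  by (rule integrable_sandwich[where a = 0 and g = "\<lambda>_. 1"]) (auto simp: D.finite_measure_axioms)

lemma block_tail_prob_le_1: "block_tail_prob L t \<le> 1"
proof -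
  have "block_tail_prob L t \<le> (\<integral>\<omega>. 1 \<partial>disorder \<mu>)" unfolding block_tail_prob_def
    by (intro integral_mono integrable_block_tail) auto
  then show ?thesis by (simp add: D.prob_space)
qed

lemma integral_exp_block_gain_le_layers:
  "(\<integral>\<omega>. exp (2/3 * block_gain lam h L \<omega>) \<partial>disorder \<mu>)
    \<le> 1 + (\<Sum>i<n. exp (2/3 * (real i + 1)) * block_tail_prob L (real i))
      + exp (- (2/3 * real n)) * (\<integral>\<omega>. exp (4/3 * block_gain lam h L \<omega>) \<partial>disorder \<mu>)"
proof -
  let ?Y = "block_gain lam h L"
  let ?I = "\<lambda>i \<omega>. exp (2/3 * (real i + 1)) * (if ?Y \<omega> \<ge> real i then 1 else (0::real))"
  have tail: "exp (2 * (2/3) * ?Y \<omega> - 2/3 * real n) = exp (- (2/3 * real n)) * exp (4/3 * ?Y \<omega>)" for \<omega>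
    by (simp flip: exp_add)
  have int_tail: "integrable (disorder \<mu>) (\<lambda>\<omega>. exp (- (2/3 * real n)) * exp (4/3 * ?Y \<omega>))"
    by (intro integrable_mult_right integral_exp_block_gain(1))
  have int_I: "integrable (disorder \<mu>) (?I i)" for i
    using integrable_block_tail by simp
  have "(\<integral>\<omega>. exp (2/3 * ?Y \<omega>) \<partial>disorder \<mu>)
      \<le> (\<integral>\<omega>. 1 + (\<Sum>i<n. ?I i \<omega>) + exp (- (2/3 * real n)) * exp (4/3 * ?Y \<omega>) \<partial>disorder \<mu>)"
  proof (intro integral_mono integral_exp_block_gain(1))
    show "integrable (disorder \<mu>) (\<lambda>\<omega>. 1 + (\<Sum>i<n. ?I i \<omega>) + exp (- (2/3 * real n)) * exp (4/3 * ?Y \<omega>))"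
      using int_tail int_I by simp
    show "exp (2/3 * ?Y \<omega>) \<le> 1 + (\<Sum>i<n. ?I i \<omega>) + exp (- (2/3 * real n)) * exp (4/3 * ?Y \<omega>)" for \<omega>
      using exp_le_layer_sum[of "2/3" "?Y \<omega>" n, unfolded tail] by simp
  qed
  also have "\<dots> = 1 + (\<Sum>i<n. \<integral>\<omega>. ?I i \<omega> \<partial>disorder \<mu>)
      + exp (- (2/3 * real n)) * (\<integral>\<omega>. exp (4/3 * ?Y \<omega>) \<partial>disorder \<mu>)"
    using int_tail int_I by (simp add: D.prob_space)
  also have "(\<Sum>i<n. \<integral>\<omega>. ?I i \<omega> \<partial>disorder \<mu>) = (\<Sum>i<n. exp (2/3 * (real i + 1)) * block_tail_prob L (real i))"
    by (simp add: block_tail_prob_def)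
  finally show ?thesis .
qed

text \<open>Chebyshev's inequality at every level at once: if the block gain had thin tails at all levels
  below \<open>n\<close>, its exponential moment of order \<open>2/3\<close> could not be large.\<close>

lemma exists_heavy_level:
  assumes large: "2 + real n * exp (2/3 + c) < (exp (-4 * lam / 3 * h) * mgf \<mu> (-4 * lam / 3)) ^ (2 * L)"
    and small: "(exp (-8 * lam / 3 * h) * mgf \<mu> (-8 * lam / 3)) ^ (2 * L) \<le> exp (2/3 * real n)"
  shows "\<exists>i<n. exp (c - 2/3 * real i) \<le> block_tail_prob L (real i)"
proof (rule ccontr)
  assume "\<not> ?thesis"
  then have thin: "block_tail_prob L (real i) < exp (c - 2/3 * real i)" if "i < n" for i
    using that by force
  have "(\<Sum>i<n. exp (2/3 * (real i + 1)) * block_tail_prob L (real i))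
      \<le> (\<Sum>i<n. exp (2/3 * (real i + 1)) * exp (c - 2/3 * real i))"
    using thin by (intro sum_mono mult_left_mono) (auto simp: less_imp_le)
  also have "\<dots> = real n * exp (2/3 + c)"
  proof -
    have "2/3 * (real i + 1) + (c - 2/3 * real i) = 2/3 + c" for i by (simp add: algebra_simps)
    then have "exp (2/3 * (real i + 1)) * exp (c - 2/3 * real i) = exp (2/3 + c)" for i
      by (metis exp_add)
    then show ?thesis by simp
  qed
  finally have sum: "(\<Sum>i<n. exp (2/3 * (real i + 1)) * block_tail_prob L (real i)) \<le> real n * exp (2/3 + c)" .
  have "exp (- (2/3 * real n)) * (\<integral>\<omega>. exp (4/3 * block_gain lam h L \<omega>) \<partial>disorder \<mu>)
      \<le> exp (- (2/3 * real n)) * exp (2/3 * real n)"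
    using small integral_exp_block_gain(2)[of "4/3" L] by (intro mult_left_mono) (simp_all add: field_simps)
  then have "exp (- (2/3 * real n)) * (\<integral>\<omega>. exp (4/3 * block_gain lam h L \<omega>) \<partial>disorder \<mu>) \<le> 1"
    by (simp flip: exp_add)
  moreover have "(\<integral>\<omega>. exp (2/3 * block_gain lam h L \<omega>) \<partial>disorder \<mu>)
      = (exp (-4 * lam / 3 * h) * mgf \<mu> (-4 * lam / 3)) ^ (2 * L)"
    using integral_exp_block_gain(2)[of "2/3" L] by (simp add: field_simps)
  ultimately show False
    using integral_exp_block_gain_le_layers[of L n] sum large by linarith
qed

lemma integrable_block_gain: "integrable (disorder \<mu>) (block_gain lam h L)"
proof -
  have "integrable \<mu> (\<lambda>x. x + h)" using integrable_identity by simp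
  from integral_component(1)[OF prob borel this]
  have "integrable (disorder \<mu>) (\<lambda>\<omega>. -2 * lam * (\<Sum>n=1..2 * L. \<omega> n + h))" by auto
  then show ?thesis unfolding block_gain_def .
qed

lemma measurable_strategy_gain [measurable]:
  "strategy_gain lam h L \<theta> a \<in> borel_measurable (disorder \<mu>)"
  unfolding strategy_gain_def by measurable

lemma integrable_strategy_gain: "integrable (disorder \<mu>) (strategy_gain lam h L \<theta> a)"
proof (rule integrable_sandwich)
  let ?C = "ln (excursion_prob L) - excursion_cost a" and ?D = "- 3/2 * real L / a"
  show "min (\<theta> + ?C) ?D \<le> strategy_gain lam h L \<theta> a \<omega>" for \<omega>
    unfolding strategy_gain_def by auto
  show "strategy_gain lam h L \<theta> a \<omega> \<le> \<bar>block_gain lam h L \<omega>\<bar> + \<bar>?C\<bar> + \<bar>?D\<bar>" for \<omega>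
    unfolding strategy_gain_def by (simp add: abs_if)
  show "integrable (disorder \<mu>) (\<lambda>\<omega>. \<bar>block_gain lam h L \<omega>\<bar> + \<bar>?C\<bar> + \<bar>?D\<bar>)"
    using integrable_block_gain by auto
qed (simp_all add: D.finite_measure_axioms)

lemma mean_log_bridge_Z_ge_strategy:
  assumes lam: "lam \<ge> 0" and a: "a > 0"
  shows "real J * (\<integral>\<omega>. strategy_gain lam h L \<theta> a \<omega> \<partial>disorder \<mu>) - excursion_cost a
    \<le> mean_log_bridge_Z \<mu> lam h (J * L)"
proof -
  let ?\<phi> = "\<lambda>i \<omega>. strategy_gain lam h L \<theta> a (shift_seq (i * (2 * L)) \<omega>)"
  have int: "integrable (disorder \<mu>) (?\<phi> i)" for i
    by (rule integrable_shift_seq[OF prob borel measurable_strategy_gain integrable_strategy_gain])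
  have "(\<integral>\<omega>. (\<Sum>i<J. ?\<phi> i \<omega>) - excursion_cost a \<partial>disorder \<mu>)
      = (\<Sum>i<J. \<integral>\<omega>. ?\<phi> i \<omega> \<partial>disorder \<mu>) - excursion_cost a"
    using int by (simp add: D.prob_space)
  also have "\<dots> = real J * (\<integral>\<omega>. strategy_gain lam h L \<theta> a \<omega> \<partial>disorder \<mu>) - excursion_cost a"
    using integral_shift_seq[OF prob borel measurable_strategy_gain] by simp
  finally have "(\<integral>\<omega>. (\<Sum>i<J. ?\<phi> i \<omega>) - excursion_cost a \<partial>disorder \<mu>)
      = real J * (\<integral>\<omega>. strategy_gain lam h L \<theta> a \<omega> \<partial>disorder \<mu>) - excursion_cost a" .
  moreover have "(\<integral>\<omega>. (\<Sum>i<J. ?\<phi> i \<omega>) - excursion_cost a \<partial>disorder \<mu>) \<le> mean_log_bridge_Z \<mu> lam h (J * L)"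
    unfolding mean_log_bridge_Z_def[OF prob borel integrable_identity lam]
    using int ln_bridge_Z_ge_strategy[OF a]
    by (intro integral_mono integrable_ln_bridge_Z[OF prob borel integrable_identity lam]) auto
  ultimately show ?thesis by simp
qed

text \<open>With \<open>a = L / p\<close> the excursion cost \<open>3/2 * ln a\<close> contains \<open>- 3/2 * ln p \<le> \<theta> - 3/2 * level_offset L\<close>,
  which cancels the threshold \<open>\<theta>\<close> in the gain of a selected block.\<close>

lemma strategy_gain_expectation_ge:
  assumes L: "L \<ge> 1" and level: "exp (level_offset L - 2/3 * \<theta>) \<le> block_tail_prob L \<theta>"
  shows "block_tail_prob L \<theta>
    \<le> (\<integral>\<omega>. strategy_gain lam h L \<theta> (real L / block_tail_prob L \<theta>) \<omega> \<partial>disorder \<mu>)"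
proof -
  let ?p = "block_tail_prob L \<theta>"
  let ?a = "real L / ?p"
  let ?C = "\<theta> + ln (excursion_prob L) - excursion_cost ?a"
  have p: "?p > 0" using level by (rule less_le_trans[OF exp_gt_zero])
  have "?C \<ge> 5/2"
  proof -
    have "level_offset L - 2/3 * \<theta> \<le> ln ?p"
      using level p by (metis ln_exp ln_mono exp_gt_zero)
    moreover have "excursion_cost ?a = ln 2 + 3/2 * (ln (real L) - ln ?p - 1) + 3/2 * ?p / real L"
      unfolding excursion_cost_def using p L by (simp add: ln_div)
    moreover have "ln (real L) \<le> ln (real L + 1)" "?p / real L \<le> 1" "ln (2::real) \<le> 1"
      using L block_tail_prob_le_1[of L \<theta>] ln_2_less_1 by (simp_all add: divide_le_eq_1)
    ultimately show ?thesis
      using ln_excursion_prob_lower_bound[of L] unfolding level_offset_def by (simp add: field_simps)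
  qed
  have "(\<integral>\<omega>. (if block_gain lam h L \<omega> \<ge> \<theta> then 1 else 0) * ?C - 3/2 * real L / ?a \<partial>disorder \<mu>)
      \<le> (\<integral>\<omega>. strategy_gain lam h L \<theta> ?a \<omega> \<partial>disorder \<mu>)"
  proof (intro integral_mono integrable_strategy_gain)
    show "integrable (disorder \<mu>)
        (\<lambda>\<omega>. (if block_gain lam h L \<omega> \<ge> \<theta> then 1 else 0) * ?C - 3/2 * real L / ?a)"
      using integrable_block_tail[where L = L and t = \<theta>] by auto
    show "(if block_gain lam h L \<omega> \<ge> \<theta> then 1 else 0) * ?C - 3/2 * real L / ?a
        \<le> strategy_gain lam h L \<theta> ?a \<omega>" for \<omega>
      unfolding strategy_gain_def using p L by auto
  qed
  also have "(\<integral>\<omega>. (if block_gain lam h L \<omega> \<ge> \<theta> then 1 else 0) * ?C - 3/2 * real L / ?a \<partial>disorder \<mu>)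
      = ?p * ?C - 3/2 * ?p"
    using integrable_block_tail[where L = L and t = \<theta>] p L unfolding block_tail_prob_def by (simp add: D.prob_space)
  finally have "?p * ?C - 3/2 * ?p \<le> (\<integral>\<omega>. strategy_gain lam h L \<theta> ?a \<omega> \<partial>disorder \<mu>)" .
  moreover have "?p * (5/2) \<le> ?p * ?C" using \<open>?C \<ge> 5/2\<close> p by (intro mult_left_mono) auto
  ultimately show ?thesis by linarith
qed

lemma exists_mean_log_bridge_Z_pos_at_level:
  assumes lam: "lam \<ge> 0" and L: "L \<ge> 1"
    and level: "exp (level_offset L - 2/3 * \<theta>) \<le> block_tail_prob L \<theta>"
  shows "\<exists>k\<ge>1. 0 < mean_log_bridge_Z \<mu> lam h k"
proof -
  let ?p = "block_tail_prob L \<theta>"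
  let ?a = "real L / ?p"
  let ?E = "\<integral>\<omega>. strategy_gain lam h L \<theta> ?a \<omega> \<partial>disorder \<mu>"
  have p: "?p > 0" using level by (rule less_le_trans[OF exp_gt_zero])
  have E: "?p \<le> ?E" by (rule strategy_gain_expectation_ge[OF L level])
  define J :: nat where "J = nat \<lceil>(excursion_cost ?a + 1) / ?p\<rceil> + 1"
  have "(excursion_cost ?a + 1) / ?p < real J" unfolding J_def by linarith
  then have "excursion_cost ?a + 1 < real J * ?p" using p by (simp add: field_simps)
  also have "\<dots> \<le> real J * ?E" using E by (intro mult_left_mono) auto
  finally have "0 < mean_log_bridge_Z \<mu> lam h (J * L)"
    using mean_log_bridge_Z_ge_strategy[OF lam, where a = ?a and J = J and L = L and \<theta> = \<theta>] p L
    by simp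
  moreover have "J * L \<ge> 1" unfolding J_def using L by simp
  ultimately show ?thesis by blast
qed

theorem exists_mean_log_bridge_Z_pos:
  assumes centered: "(\<integral>x. x \<partial>\<mu>) = 0" and lam: "lam > 0"
    and below: "h < 3 / (4 * lam) * ln (mgf \<mu> (- 4 * lam / 3))"
  shows "\<exists>k\<ge>1. 0 < mean_log_bridge_Z \<mu> lam h k"
proof -
  define m1 where "m1 = exp (-4 * lam / 3 * h) * mgf \<mu> (-4 * lam / 3)"
  define m2 where "m2 = exp (-8 * lam / 3 * h) * mgf \<mu> (-8 * lam / 3)"
  have mgf_pos: "0 < mgf \<mu> g" for g using mgf_ge_1[OF centered, of g] by linarith
  have "4 * lam / 3 * h < ln (mgf \<mu> (-4 * lam / 3))" using below lam by (simp add: field_simps)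
  moreover have "m1 = exp (-4 * lam / 3 * h + ln (mgf \<mu> (-4 * lam / 3)))"
    unfolding m1_def exp_add using mgf_pos by simp
  ultimately have m1: "1 < m1" by simp
  have m2: "0 < m2" unfolding m2_def using mgf_pos by simp
  obtain L n :: nat where L: "L \<ge> 1"
    and "2 + real n * exp (2/3 + level_offset L) < m1 ^ (2 * L)" "m2 ^ (2 * L) \<le> exp (2/3 * real n)"
    using level_parameters[OF m1 m2] by blast
  then obtain i where "exp (level_offset L - 2/3 * real i) \<le> block_tail_prob L (real i)"
    using exists_heavy_level[of n "level_offset L" L] unfolding m1_def m2_def by blast
  then show ?thesis using exists_mean_log_bridge_Z_pos_at_level[OF _ L] lam by simp
qed

end

theorem theorem1p1:
  fixes \<mu> :: "real measure" and lam h :: real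
  assumes "prob_space \<mu>"
    and "sets \<mu> = sets borel"
    and "\<And>\<alpha>. integrable \<mu> (\<lambda>x. exp (\<alpha> * x))"
    and "(\<integral>x. x \<partial>\<mu>) = 0"
    and "(\<integral>x. x ^ 2 \<partial>\<mu>) = 1"
    and "lam > 0" and "h \<ge> 0"
    and "h < 3 / (4 * lam) * ln (mgf \<mu> (- 4 * lam / 3))"
  shows "free_energy \<mu> lam h > 0"
proof -
  have "integrable \<mu> (\<lambda>x. x)" by (rule integrable_identity[OF assms(1-3)])
  moreover obtain k where "k \<ge> 1" "0 < mean_log_bridge_Z \<mu> lam h k"
    using exists_mean_log_bridge_Z_pos[OF assms(1-4,6,8)] by blast
  ultimately show ?thesis
    using free_energy_pos[OF assms(1,2)] assms(6) by simp
qed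

end
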